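(* Let $Q$ be a commutative automorphic loop of nilpotency class $3$, let $x,y\in Q$, and set $u_1=(x,x,y)$, $u_2=(x,y,y)$, $z_2=(x,x,u_2)$, $z_3=(x,y,u_1)$, $z_4=(x,y,u_2)$, $z_5=(y,x,u_1)$, $z_6=(y,x,u_2)$, $z_7=(y,y,u_1)$. Then $z_2=z_3=z_5$ and $z_4=z_6=z_7$.
   Context: A loop is a set with a binary operation such that all left and right translations $L_a:b\mapsto ab$, $R_a:b\mapsto ba$ are bijections and there is a two-sided identity $1$. The inner mapping group is the stabilizer of $1$ in the group generated by all translations; $Q$ is automorphic if all inner mappings are automorphisms. The associator $(a,b,c)$ is defined by $(ab)c=(a(bc))(a,b,c)$. The center $Z(Q)$ is the set of elements fixed by all inner mappings; $Z_0=1$, $Z_{i+1}(Q)$ is the preimage of $Z(Q/Z_i(Q))$, and $Q$ has nilpotency class $n$ if $Z_{n-1}(Q)\neq Q=Z_n(Q)$. *)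

theory Defs
  imports Main
begin

text \<open>A loop is given by a carrier set Q, a multiplication m and an identity e.
 Translations and all permutations in the multiplication group are made extensional
 (identity outside Q).\<close>

definition loop :: "'a set \<Rightarrow> ('a \<Rightarrow> 'a \<Rightarrow> 'a) \<Rightarrow> 'a \<Rightarrow> bool" where
  "loop Q m e \<longleftrightarrow>
     (\<forall>a\<in>Q. \<forall>b\<in>Q. m a b \<in> Q) \<and> e \<in> Q \<and>
     (\<forall>a\<in>Q. m e a = a \<and> m a e = a) \<and>
     (\<forall>a\<in>Q. bij_betw (\<lambda>b. m a b) Q Q) \<and>
     (\<forall>a\<in>Q. bij_betw (\<lambda>b. m b a) Q Q)"

definition ltrans :: "'a set \<Rightarrow> ('a \<Rightarrow> 'a \<Rightarrow> 'a) \<Rightarrow> 'a \<Rightarrow> 'a \<Rightarrow> 'a" where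
  "ltrans Q m a = (\<lambda>b. if b \<in> Q then m a b else b)"

definition rtrans :: "'a set \<Rightarrow> ('a \<Rightarrow> 'a \<Rightarrow> 'a) \<Rightarrow> 'a \<Rightarrow> 'a \<Rightarrow> 'a" where
  "rtrans Q m a = (\<lambda>b. if b \<in> Q then m b a else b)"

definition perm_inv :: "'a set \<Rightarrow> ('a \<Rightarrow> 'a) \<Rightarrow> 'a \<Rightarrow> 'a" where
  "perm_inv Q f = (\<lambda>b. if b \<in> Q then inv_into Q f b else b)"

inductive_set mlt_group :: "'a set \<Rightarrow> ('a \<Rightarrow> 'a \<Rightarrow> 'a) \<Rightarrow> ('a \<Rightarrow> 'a) set"
  for Q m where
  mlt_id: "id \<in> mlt_group Q m"
| mlt_L: "a \<in> Q \<Longrightarrow> ltrans Q m a \<in> mlt_group Q m"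
| mlt_R: "a \<in> Q \<Longrightarrow> rtrans Q m a \<in> mlt_group Q m"
| mlt_comp: "f \<in> mlt_group Q m \<Longrightarrow> g \<in> mlt_group Q m \<Longrightarrow> f \<circ> g \<in> mlt_group Q m"
| mlt_inv: "f \<in> mlt_group Q m \<Longrightarrow> perm_inv Q f \<in> mlt_group Q m"

definition inn_group :: "'a set \<Rightarrow> ('a \<Rightarrow> 'a \<Rightarrow> 'a) \<Rightarrow> 'a \<Rightarrow> ('a \<Rightarrow> 'a) set" where
  "inn_group Q m e = {f \<in> mlt_group Q m. f e = e}"

definition automorphic_loop :: "'a set \<Rightarrow> ('a \<Rightarrow> 'a \<Rightarrow> 'a) \<Rightarrow> 'a \<Rightarrow> bool" where
  "automorphic_loop Q m e \<longleftrightarrow> loop Q m e \<and>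
     (\<forall>f\<in>inn_group Q m e. \<forall>a\<in>Q. \<forall>b\<in>Q. f (m a b) = m (f a) (f b))"

definition commutative_loop :: "'a set \<Rightarrow> ('a \<Rightarrow> 'a \<Rightarrow> 'a) \<Rightarrow> 'a \<Rightarrow> bool" where
  "commutative_loop Q m e \<longleftrightarrow> loop Q m e \<and> (\<forall>a\<in>Q. \<forall>b\<in>Q. m a b = m b a)"

definition loop_center :: "'a set \<Rightarrow> ('a \<Rightarrow> 'a \<Rightarrow> 'a) \<Rightarrow> 'a \<Rightarrow> 'a set" where
  "loop_center Q m e = {a \<in> Q. \<forall>f\<in>inn_group Q m e. f a = a}"

definition ldiv :: "'a set \<Rightarrow> ('a \<Rightarrow> 'a \<Rightarrow> 'a) \<Rightarrow> 'a \<Rightarrow> 'a \<Rightarrow> 'a" where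
  "ldiv Q m x y = (THE d. d \<in> Q \<and> m x d = y)"

definition associator :: "'a set \<Rightarrow> ('a \<Rightarrow> 'a \<Rightarrow> 'a) \<Rightarrow> 'a \<Rightarrow> 'a \<Rightarrow> 'a \<Rightarrow> 'a" where
  "associator Q m a b c = ldiv Q m (m a (m b c)) (m (m a b) c)"

definition lcoset :: "('a \<Rightarrow> 'a \<Rightarrow> 'a) \<Rightarrow> 'a \<Rightarrow> 'a set \<Rightarrow> 'a set" where
  "lcoset m a N = {m a n | n. n \<in> N}"

definition quot_carrier :: "'a set \<Rightarrow> ('a \<Rightarrow> 'a \<Rightarrow> 'a) \<Rightarrow> 'a set \<Rightarrow> 'a set set" where
  "quot_carrier Q m N = {lcoset m a N | a. a \<in> Q}"

definition quot_mult :: "('a \<Rightarrow> 'a \<Rightarrow> 'a) \<Rightarrow> 'a set \<Rightarrow> 'a set \<Rightarrow> 'a set \<Rightarrow> 'a set" where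
  "quot_mult m N A B = lcoset m (m (SOME a. a \<in> A) (SOME b. b \<in> B)) N"

fun upper_center :: "'a set \<Rightarrow> ('a \<Rightarrow> 'a \<Rightarrow> 'a) \<Rightarrow> 'a \<Rightarrow> nat \<Rightarrow> 'a set" where
  "upper_center Q m e 0 = {e}"
| "upper_center Q m e (Suc i) =
     (let N = upper_center Q m e i in
      {a \<in> Q. lcoset m a N \<in> loop_center (quot_carrier Q m N) (quot_mult m N) N})"

definition nilpotency_class :: "'a set \<Rightarrow> ('a \<Rightarrow> 'a \<Rightarrow> 'a) \<Rightarrow> 'a \<Rightarrow> nat \<Rightarrow> bool" where
  "nilpotency_class Q m e n \<longleftrightarrow>
     upper_center Q m e n = Q \<and> (n > 0 \<longrightarrow> upper_center Q m e (n - 1) \<noteq> Q)"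

end

theory Submission
  imports Defs
begin

text \<open>Write L(a,b) c = c delta(a,b,c). In class 3 every delta(a,b,c) lies in Z_2, and for u in Z_2
  the deviations delta(a,b,u) are central, with (a,b,u) = delta(a,b,u)^-1. So each claimed equality
  of associators reduces to an equality of central deviations in the abelian group Z(Q). Two such
  equalities carry the argument: delta(x,y,u1) = delta(x,x,u2), because L(x,y) fixes x and hence
  commutes with L(x,x) on y; and delta(x,y,u1) = delta(y,x,u1), obtained by expanding
  (x tau)((x tau) y) with tau = delta(y,x,x) in two ways. The remaining equalities follow by
  exchanging x and y, since (a,b,c)(c,b,a) is central.\<close>

locale comm_loop =
  fixes Q :: "'a set" and m :: "'a \<Rightarrow> 'a \<Rightarrow> 'a" and e :: 'a
  assumes is_loop: "loop Q m e"
    and comm: "\<And>a b. a \<in> Q \<Longrightarrow> b \<in> Q \<Longrightarrow> m a b = m b a"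
begin

abbreviation ld where "ld \<equiv> ldiv Q m"

lemma mult_closed [intro, simp]: "a \<in> Q \<Longrightarrow> b \<in> Q \<Longrightarrow> m a b \<in> Q"
  using is_loop unfolding loop_def by blast

lemma unit_closed [intro, simp]: "e \<in> Q"
  using is_loop unfolding loop_def by blast

lemma left_unit [simp]: "a \<in> Q \<Longrightarrow> m e a = a"
  using is_loop unfolding loop_def by blast

lemma right_unit [simp]: "a \<in> Q \<Longrightarrow> m a e = a"
  using is_loop unfolding loop_def by blast

lemma bij_left_mult: "a \<in> Q \<Longrightarrow> bij_betw (\<lambda>b. m a b) Q Q"
  using is_loop unfolding loop_def by blast

lemma bij_right_mult: "a \<in> Q \<Longrightarrow> bij_betw (\<lambda>b. m b a) Q Q"
  using is_loop unfolding loop_def by blast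

lemma left_cancel: "a \<in> Q \<Longrightarrow> b \<in> Q \<Longrightarrow> c \<in> Q \<Longrightarrow> m a b = m a c \<Longrightarrow> b = c"
  using bij_left_mult[of a] unfolding bij_betw_def inj_on_def by blast

lemma ldiv_spec:
  assumes "a \<in> Q" "b \<in> Q"
  shows "ld a b \<in> Q \<and> m a (ld a b) = b"
proof -
  have "\<exists>d\<in>Q. m a d = b"
    using bij_left_mult[OF assms(1)] assms(2) unfolding bij_betw_def by (metis imageE)
  then have "\<exists>!d. d \<in> Q \<and> m a d = b"
    using left_cancel[OF assms(1)] by blast
  then show ?thesis
    unfolding ldiv_def by (rule theI')
qed

lemma ldiv_closed [intro, simp]: "a \<in> Q \<Longrightarrow> b \<in> Q \<Longrightarrow> ld a b \<in> Q"
  using ldiv_spec by blast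

lemma mult_ldiv [simp]: "a \<in> Q \<Longrightarrow> b \<in> Q \<Longrightarrow> m a (ld a b) = b"
  using ldiv_spec by blast

lemma ldiv_unique: "a \<in> Q \<Longrightarrow> d \<in> Q \<Longrightarrow> m a d = b \<Longrightarrow> ld a b = d"
  using mult_ldiv[of a b] left_cancel[of a] by (metis mult_closed ldiv_closed)

lemma ldiv_mult [simp]: "a \<in> Q \<Longrightarrow> d \<in> Q \<Longrightarrow> ld a (m a d) = d"
  using ldiv_unique by blast

lemma mlt_group_bij: "f \<in> mlt_group Q m \<Longrightarrow> bij_betw f Q Q"
proof (induction rule: mlt_group.induct)
  case mlt_id
  then show ?case by (simp add: bij_betw_def)
next
  case (mlt_L a)
  have "bij_betw (ltrans Q m a) Q Q = bij_betw (\<lambda>b. m a b) Q Q"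
    by (rule bij_betw_cong) (simp add: ltrans_def)
  then show ?case using bij_left_mult mlt_L by simp
next
  case (mlt_R a)
  have "bij_betw (rtrans Q m a) Q Q = bij_betw (\<lambda>b. m b a) Q Q"
    by (rule bij_betw_cong) (simp add: rtrans_def)
  then show ?case using bij_right_mult mlt_R by simp
next
  case (mlt_comp f g)
  then show ?case using bij_betw_trans by blast
next
  case (mlt_inv f)
  have "bij_betw (perm_inv Q f) Q Q = bij_betw (inv_into Q f) Q Q"
    by (rule bij_betw_cong) (simp add: perm_inv_def)
  then show ?case using bij_betw_inv_into mlt_inv by blast
qed

lemma mlt_group_closed: "f \<in> mlt_group Q m \<Longrightarrow> a \<in> Q \<Longrightarrow> f a \<in> Q"
  using mlt_group_bij bij_betwE by blast

lemma perm_inv_left: "f \<in> mlt_group Q m \<Longrightarrow> a \<in> Q \<Longrightarrow> perm_inv Q f (f a) = a"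
  using mlt_group_bij[of f] mlt_group_closed[of f a] unfolding perm_inv_def bij_betw_def
  by (simp add: inv_into_f_f)

lemma perm_inv_right: "f \<in> mlt_group Q m \<Longrightarrow> a \<in> Q \<Longrightarrow> f (perm_inv Q f a) = a"
  using mlt_group_bij[of f] unfolding perm_inv_def bij_betw_def
  by (simp add: f_inv_into_f)

lemma perm_inv_closed: "f \<in> mlt_group Q m \<Longrightarrow> a \<in> Q \<Longrightarrow> perm_inv Q f a \<in> Q"
  using mlt_group_closed mlt_inv by blast

lemma perm_inv_ltrans: "p \<in> Q \<Longrightarrow> a \<in> Q \<Longrightarrow> perm_inv Q (ltrans Q m p) a = ld p a"
  using perm_inv_left[of "ltrans Q m p" "ld p a"] mlt_L[of p Q m]
  by (simp add: ltrans_def)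

lemma inn_group_mlt: "f \<in> inn_group Q m e \<Longrightarrow> f \<in> mlt_group Q m"
  by (simp add: inn_group_def)

lemma inn_group_unit: "f \<in> inn_group Q m e \<Longrightarrow> f e = e"
  by (simp add: inn_group_def)

lemma inn_group_closed: "f \<in> inn_group Q m e \<Longrightarrow> a \<in> Q \<Longrightarrow> f a \<in> Q"
  using mlt_group_closed inn_group_mlt by blast

lemma inn_group_comp:
  "f \<in> inn_group Q m e \<Longrightarrow> g \<in> inn_group Q m e \<Longrightarrow> f \<circ> g \<in> inn_group Q m e"
  unfolding inn_group_def by (auto intro: mlt_comp)

lemma inn_group_perm_inv:
  assumes "f \<in> inn_group Q m e"
  shows "perm_inv Q f \<in> inn_group Q m e"
proof -
  have f: "f \<in> mlt_group Q m" "f e = e"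
    using assms by (auto simp: inn_group_def)
  have "perm_inv Q f e = e"
    using perm_inv_left[OF f(1) unit_closed] f(2) by simp
  then show ?thesis
    using mlt_inv[OF f(1)] by (simp add: inn_group_def)
qed

definition inner_perm :: "'a \<Rightarrow> 'a \<Rightarrow> 'a \<Rightarrow> 'a" where
  "inner_perm a b = perm_inv Q (ltrans Q m (m a b)) \<circ> ltrans Q m a \<circ> ltrans Q m b"

definition inner :: "'a \<Rightarrow> 'a \<Rightarrow> 'a \<Rightarrow> 'a" where
  "inner a b c = ld (m a b) (m a (m b c))"

lemma inner_closed [intro, simp]: "a \<in> Q \<Longrightarrow> b \<in> Q \<Longrightarrow> c \<in> Q \<Longrightarrow> inner a b c \<in> Q"
  unfolding inner_def by simp

lemma mult_inner: "a \<in> Q \<Longrightarrow> b \<in> Q \<Longrightarrow> c \<in> Q \<Longrightarrow> m a (m b c) = m (m a b) (inner a b c)"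
  unfolding inner_def by simp

lemma inner_perm_apply: "a \<in> Q \<Longrightarrow> b \<in> Q \<Longrightarrow> c \<in> Q \<Longrightarrow> inner_perm a b c = inner a b c"
  using perm_inv_ltrans[of "m a b" "m a (m b c)"]
  by (simp add: inner_perm_def inner_def ltrans_def)

lemma inner_perm_in_inn_group:
  assumes "a \<in> Q" "b \<in> Q"
  shows "inner_perm a b \<in> inn_group Q m e"
proof -
  have "inner_perm a b \<in> mlt_group Q m"
    unfolding inner_perm_def by (intro mlt_comp mlt_inv mlt_L) (simp_all add: assms)
  moreover have "inner_perm a b e = e"
    using inner_perm_apply[OF assms unit_closed] assms by (simp add: inner_def ldiv_unique)
  ultimately show ?thesis
    unfolding inn_group_def by blast
qed

subsection \<open>Normal subloops and quotients\<close>

definition normal_subloop :: "'a set \<Rightarrow> bool" where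
  "normal_subloop N \<longleftrightarrow> N \<subseteq> Q \<and> e \<in> N \<and> (\<forall>a\<in>N. \<forall>b\<in>N. m a b \<in> N)
     \<and> (\<forall>a\<in>N. \<forall>b\<in>N. ld a b \<in> N) \<and> (\<forall>f\<in>inn_group Q m e. \<forall>n\<in>N. f n \<in> N)"

abbreviation coset where "coset a N \<equiv> lcoset m a N"

abbreviation quot_carr where "quot_carr N \<equiv> quot_carrier Q m N"

lemma coset_in_quot_carrier: "a \<in> Q \<Longrightarrow> coset a N \<in> quot_carr N"
  unfolding quot_carrier_def by blast

lemma quot_carrierE: "X \<in> quot_carr N \<Longrightarrow> \<exists>a\<in>Q. X = coset a N"
  unfolding quot_carrier_def by blast

context
  fixes N
  assumes normal: "normal_subloop N"
begin

lemma normal_subloop_closed: "n \<in> N \<Longrightarrow> n \<in> Q"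
  using normal unfolding normal_subloop_def by blast

lemma normal_subloop_unit: "e \<in> N"
  using normal unfolding normal_subloop_def by blast

lemma normal_subloop_mult: "a \<in> N \<Longrightarrow> b \<in> N \<Longrightarrow> m a b \<in> N"
  using normal unfolding normal_subloop_def by blast

lemma normal_subloop_ldiv: "a \<in> N \<Longrightarrow> b \<in> N \<Longrightarrow> ld a b \<in> N"
  using normal unfolding normal_subloop_def by blast

lemma normal_subloop_inn: "f \<in> inn_group Q m e \<Longrightarrow> n \<in> N \<Longrightarrow> f n \<in> N"
  using normal unfolding normal_subloop_def by blast

lemma normal_subloop_inner: "a \<in> Q \<Longrightarrow> b \<in> Q \<Longrightarrow> n \<in> N \<Longrightarrow> inner a b n \<in> N"
  using normal_subloop_inn[OF inner_perm_in_inn_group] inner_perm_apply normal_subloop_closed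
  by metis

lemma inner_surj_normal_subloop:
  assumes "a \<in> Q" "b \<in> Q" "n \<in> N"
  obtains w where "w \<in> N" "inner a b w = n"
proof -
  let ?p = "inner_perm a b"
  have p: "?p \<in> inn_group Q m e"
    using inner_perm_in_inn_group assms by blast
  define w where "w = perm_inv Q ?p n"
  have "w \<in> N"
    unfolding w_def using normal_subloop_inn[OF inn_group_perm_inv[OF p] assms(3)] .
  moreover have "?p w = n"
    unfolding w_def using perm_inv_right inn_group_mlt[OF p] normal_subloop_closed assms(3) by blast
  ultimately show ?thesis
    using that inner_perm_apply assms normal_subloop_closed by metis
qed

lemma cosetE: "c \<in> coset a N \<Longrightarrow> \<exists>n\<in>N. c = m a n"
  unfolding lcoset_def by blast

lemma cosetI: "n \<in> N \<Longrightarrow> m a n \<in> coset a N"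
  unfolding lcoset_def by blast

lemma coset_self: "a \<in> Q \<Longrightarrow> a \<in> coset a N"
  using cosetI[OF normal_subloop_unit, of a] by simp

lemma coset_unit: "coset e N = N"
proof
  show "coset e N \<subseteq> N"
    using cosetE normal_subloop_closed by fastforce
  show "N \<subseteq> coset e N"
  proof
    fix n assume n: "n \<in> N"
    then have "m e n \<in> coset e N" by (rule cosetI)
    then show "n \<in> coset e N" using normal_subloop_closed n by simp
  qed
qed

lemma coset_mult_right: 
  assumes a: "a \<in> Q" and n: "n \<in> N"
  shows "coset (m a n) N = coset a N"
proof
  have nQ: "n \<in> Q" using normal_subloop_closed n .
  show "coset (m a n) N \<subseteq> coset a N"
  proof
    fix c assume "c \<in> coset (m a n) N"
    then obtain n' where n': "n' \<in> N" "c = m (m a n) n'" using cosetE by blast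
    obtain w where w: "w \<in> N" "inner a n w = n'"
      using inner_surj_normal_subloop[OF a nQ n'(1)] .
    then have "m a (m n w) = c"
      using mult_inner[OF a nQ] normal_subloop_closed n' by simp
    then show "c \<in> coset a N"
      using cosetI normal_subloop_mult[OF n w(1)] by metis
  qed
  show "coset a N \<subseteq> coset (m a n) N"
  proof
    fix c assume "c \<in> coset a N"
    then obtain n' where n': "n' \<in> N" "c = m a n'" using cosetE by blast
    define v where "v = ld n n'"
    have v: "v \<in> N" "v \<in> Q"
      unfolding v_def using normal_subloop_ldiv normal_subloop_closed n n' by blast+
    have "m n v = n'"
      unfolding v_def using nQ normal_subloop_closed n' by simp
    then have "c = m (m a n) (inner a n v)"
      using mult_inner[OF a nQ v(2)] n' by simp
    then show "c \<in> coset (m a n) N"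
      using cosetI normal_subloop_inner[OF a nQ v(1)] by metis
  qed
qed

lemma coset_eq_iff: "a \<in> Q \<Longrightarrow> b \<in> Q \<Longrightarrow> coset a N = coset b N \<longleftrightarrow> (\<exists>n\<in>N. a = m b n)"
  using coset_mult_right coset_self cosetE by metis

lemma coset_mult_assoc_right:
  assumes a: "a \<in> Q" and b: "b \<in> Q" and n: "n \<in> N"
  shows "coset (m a (m b n)) N = coset (m a b) N"
  using mult_inner[OF a b normal_subloop_closed[OF n]] normal_subloop_inner[OF a b n]
    coset_mult_right a b by simp

lemma coset_mult_mult:
  assumes a: "a \<in> Q" and b: "b \<in> Q" and n1: "n1 \<in> N" and n2: "n2 \<in> N"
  shows "coset (m (m a n1) (m b n2)) N = coset (m a b) N"
proof -
  have q: "n1 \<in> Q" "n2 \<in> Q" using normal_subloop_closed n1 n2 by auto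
  have "coset (m (m a n1) (m b n2)) N = coset (m (m a n1) b) N"
    using coset_mult_assoc_right a b q n2 by simp
  also have "m (m a n1) b = m b (m a n1)" using comm a b q by simp
  also have "coset (m b (m a n1)) N = coset (m b a) N" using coset_mult_assoc_right a b n1 by simp
  also have "m b a = m a b" using comm a b by simp
  finally show ?thesis .
qed

lemma quot_mult_coset:
  assumes a: "a \<in> Q" and b: "b \<in> Q"
  shows "quot_mult m N (coset a N) (coset b N) = coset (m a b) N"
proof -
  obtain n1 where n1: "n1 \<in> N" "(SOME c. c \<in> coset a N) = m a n1"
    using someI[of "\<lambda>c. c \<in> coset a N" a] coset_self[OF a] cosetE by blast
  obtain n2 where n2: "n2 \<in> N" "(SOME c. c \<in> coset b N) = m b n2"
    using someI[of "\<lambda>c. c \<in> coset b N" b] coset_self[OF b] cosetE by blast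
  show ?thesis
    unfolding quot_mult_def n1(2) n2(2) using coset_mult_mult a b n1 n2 by simp
qed

lemma coset_left_mult_iff:
  assumes a: "a \<in> Q" and b: "b \<in> Q" and c: "c \<in> Q"
  shows "coset (m c a) N = coset (m c b) N \<longleftrightarrow> coset a N = coset b N"
proof
  assume "coset a N = coset b N"
  then obtain n where n: "n \<in> N" "a = m b n" using coset_eq_iff a b by blast
  show "coset (m c a) N = coset (m c b) N" using coset_mult_assoc_right c b n by simp
next
  assume "coset (m c a) N = coset (m c b) N"
  then obtain n where n: "n \<in> N" "m c a = m (m c b) n" using coset_eq_iff a b c by blast
  obtain w where w: "w \<in> N" "inner c b w = n"
    using inner_surj_normal_subloop[OF c b n(1)] .
  have wQ: "w \<in> Q" using normal_subloop_closed w(1) .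
  then have "m c (m b w) = m c a" using mult_inner[OF c b wQ] n w(2) by simp
  then have "a = m b w" using left_cancel c a b wQ by (metis mult_closed)
  then show "coset a N = coset b N" using coset_mult_right b w(1) by simp
qed

lemma mlt_group_respects_coset:
  "f \<in> mlt_group Q m \<Longrightarrow> a \<in> Q \<Longrightarrow> b \<in> Q \<Longrightarrow>
   coset (f a) N = coset (f b) N \<longleftrightarrow> coset a N = coset b N"
proof (induction arbitrary: a b rule: mlt_group.induct)
  case mlt_id
  then show ?case by simp
next
  case (mlt_L c)
  then show ?case using coset_left_mult_iff by (simp add: ltrans_def)
next
  case (mlt_R c)
  then show ?case using coset_left_mult_iff comm by (simp add: rtrans_def)
next
  case (mlt_comp f g)
  then show ?case using mlt_group_closed by simp
next
  case (mlt_inv f)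
  have "coset (f (perm_inv Q f a)) N = coset (f (perm_inv Q f b)) N \<longleftrightarrow>
        coset (perm_inv Q f a) N = coset (perm_inv Q f b) N"
    using mlt_inv perm_inv_closed by blast
  then show ?case using perm_inv_right[of f a] perm_inv_right[of f b] mlt_inv by simp
qed

definition induces :: "('a \<Rightarrow> 'a) \<Rightarrow> ('a set \<Rightarrow> 'a set) \<Rightarrow> bool" where
  "induces f F \<longleftrightarrow> (\<forall>a\<in>Q. F (coset a N) = coset (f a) N)"

lemma induces_comp: "induces f F \<Longrightarrow> induces g G \<Longrightarrow> g \<in> mlt_group Q m \<Longrightarrow> induces (f \<circ> g) (F \<circ> G)"
  unfolding induces_def using mlt_group_closed by auto

lemma induces_ltrans:
  "c \<in> Q \<Longrightarrow> induces (ltrans Q m c) (ltrans (quot_carr N) (quot_mult m N) (coset c N))"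
  unfolding induces_def using coset_in_quot_carrier quot_mult_coset by (simp add: ltrans_def)

lemma induces_rtrans:
  "c \<in> Q \<Longrightarrow> induces (rtrans Q m c) (rtrans (quot_carr N) (quot_mult m N) (coset c N))"
  unfolding induces_def using coset_in_quot_carrier quot_mult_coset by (simp add: rtrans_def)

lemma induces_perm_inv:
  assumes f: "f \<in> mlt_group Q m" and F: "induces f F"
  shows "induces (perm_inv Q f) (perm_inv (quot_carr N) F)"
  unfolding induces_def
proof
  fix a assume a: "a \<in> Q"
  have inj: "inj_on F (quot_carr N)"
  proof (rule inj_onI)
    fix X Y assume X: "X \<in> quot_carr N" and Y: "Y \<in> quot_carr N" and eq: "F X = F Y"
    obtain x where x: "x \<in> Q" "X = coset x N" using quot_carrierE X by blast
    obtain y where y: "y \<in> Q" "Y = coset y N" using quot_carrierE Y by blast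
    have "coset (f x) N = coset (f y) N" using eq F x y unfolding induces_def by simp
    then show "X = Y" using mlt_group_respects_coset[OF f x(1) y(1)] x y by simp
  qed
  have pa: "perm_inv Q f a \<in> Q" using perm_inv_closed[OF f a] .
  have "F (coset (perm_inv Q f a) N) = coset a N"
    using F pa perm_inv_right[OF f a] unfolding induces_def by simp
  then have "inv_into (quot_carr N) F (coset a N) = coset (perm_inv Q f a) N"
    using inv_into_f_eq[OF inj coset_in_quot_carrier[OF pa]] by blast
  then show "perm_inv (quot_carr N) F (coset a N) = coset (perm_inv Q f a) N"
    using coset_in_quot_carrier[OF a] by (simp add: perm_inv_def)
qed

lemma mlt_group_induces:
  "f \<in> mlt_group Q m \<Longrightarrow> \<exists>F\<in>mlt_group (quot_carr N) (quot_mult m N). induces f F"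
proof (induction rule: mlt_group.induct)
  case mlt_id
  then show ?case by (intro bexI[of _ id] mlt_group.mlt_id) (simp add: induces_def)
next
  case (mlt_L c)
  then show ?case by (meson induces_ltrans mlt_group.mlt_L coset_in_quot_carrier)
next
  case (mlt_R c)
  then show ?case by (meson induces_rtrans mlt_group.mlt_R coset_in_quot_carrier)
next
  case (mlt_comp f g)
  then show ?case by (meson induces_comp mlt_group.mlt_comp)
next
  case (mlt_inv f)
  then show ?case by (meson induces_perm_inv mlt_group.mlt_inv)
qed

lemma mlt_group_lift:
  "F \<in> mlt_group (quot_carr N) (quot_mult m N) \<Longrightarrow> \<exists>f\<in>mlt_group Q m. induces f F"
proof (induction rule: mlt_group.induct)
  case mlt_id
  then show ?case by (intro bexI[of _ id] mlt_group.mlt_id) (simp add: induces_def)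
next
  case (mlt_L A)
  then show ?case using quot_carrierE induces_ltrans mlt_group.mlt_L by metis
next
  case (mlt_R A)
  then show ?case using quot_carrierE induces_rtrans mlt_group.mlt_R by metis
next
  case (mlt_comp F G)
  then show ?case by (meson induces_comp mlt_group.mlt_comp)
next
  case (mlt_inv F)
  then show ?case by (meson induces_perm_inv mlt_group.mlt_inv)
qed

lemma inn_group_lift:
  assumes F: "F \<in> inn_group (quot_carr N) (quot_mult m N) N"
  shows "\<exists>g\<in>inn_group Q m e. induces g F"
proof -
  obtain f where f: "f \<in> mlt_group Q m" "induces f F"
    using mlt_group_lift F unfolding inn_group_def by blast
  have "coset (f e) N = F (coset e N)" using f(2) unfolding induces_def by simp
  also have "\<dots> = coset e N" using F coset_unit by (simp add: inn_group_def)
  finally obtain n where "n \<in> N" "f e = m e n"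
    using coset_eq_iff mlt_group_closed f(1) by (metis unit_closed)
  then have feN: "f e \<in> N" and feQ: "f e \<in> Q" using normal_subloop_closed by simp_all
  define g where "g = perm_inv Q (ltrans Q m (f e)) \<circ> f"
  have g_eq: "g b = ld (f e) (f b)" if "b \<in> Q" for b
    unfolding g_def using perm_inv_ltrans feQ mlt_group_closed f that by simp
  have "g \<in> mlt_group Q m"
    unfolding g_def using f feQ by (intro mlt_comp mlt_inv mlt_L)
  moreover have "g e = e" using g_eq[OF unit_closed] feQ ldiv_unique by simp
  ultimately have gi: "g \<in> inn_group Q m e" by (simp add: inn_group_def)
  have "F (coset b N) = coset (g b) N" if b: "b \<in> Q" for b
  proof -
    have fb: "f b \<in> Q" using mlt_group_closed f b by simp
    have gb: "g b \<in> Q" using g_eq b feQ fb by simp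
    have "f b = m (g b) (f e)" using g_eq b feQ fb comm gb by simp
    then have "coset (f b) N = coset (g b) N" using coset_mult_right[OF gb feN] by simp
    then show ?thesis using f(2) b unfolding induces_def by simp
  qed
  then show ?thesis using gi unfolding induces_def by blast
qed

lemma coset_in_quot_center_iff:
  assumes a: "a \<in> Q"
  shows "coset a N \<in> loop_center (quot_carr N) (quot_mult m N) N \<longleftrightarrow>
         (\<forall>g\<in>inn_group Q m e. coset (g a) N = coset a N)"
proof
  assume H: "coset a N \<in> loop_center (quot_carr N) (quot_mult m N) N"
  show "\<forall>g\<in>inn_group Q m e. coset (g a) N = coset a N"
  proof
    fix g assume g: "g \<in> inn_group Q m e"
    obtain G where G: "G \<in> mlt_group (quot_carr N) (quot_mult m N)" "induces g G"
      using mlt_group_induces inn_group_mlt[OF g] by blast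
    have "G N = N"
      using G(2) coset_unit inn_group_unit[OF g] unfolding induces_def by (metis unit_closed)
    then have "G \<in> inn_group (quot_carr N) (quot_mult m N) N"
      using G(1) by (simp add: inn_group_def)
    then have "G (coset a N) = coset a N" using H by (simp add: loop_center_def)
    then show "coset (g a) N = coset a N" using G(2) a unfolding induces_def by simp
  qed
next
  assume "\<forall>g\<in>inn_group Q m e. coset (g a) N = coset a N"
  then have "F (coset a N) = coset a N" if "F \<in> inn_group (quot_carr N) (quot_mult m N) N" for F
    using inn_group_lift[OF that] a unfolding induces_def by metis
  then show "coset a N \<in> loop_center (quot_carr N) (quot_mult m N) N"
    unfolding loop_center_def using coset_in_quot_carrier a by blast
qed

end

end

locale aut_comm_loop = comm_loop +
  assumes automorphic: "automorphic_loop Q m e"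
begin

lemma inn_group_hom: "f \<in> inn_group Q m e \<Longrightarrow> a \<in> Q \<Longrightarrow> b \<in> Q \<Longrightarrow> f (m a b) = m (f a) (f b)"
  using automorphic unfolding automorphic_loop_def by blast

lemma inn_group_ldiv:
  assumes f: "f \<in> inn_group Q m e" and a: "a \<in> Q" and b: "b \<in> Q"
  shows "f (ld a b) = ld (f a) (f b)"
proof -
  have "m (f a) (f (ld a b)) = f b" using inn_group_hom[OF f a ldiv_closed[OF a b]] a b by simp
  then show ?thesis using ldiv_unique inn_group_closed f a b ldiv_closed by metis
qed

lemma inner_mult:
  "a \<in> Q \<Longrightarrow> b \<in> Q \<Longrightarrow> c \<in> Q \<Longrightarrow> d \<in> Q \<Longrightarrow> inner a b (m c d) = m (inner a b c) (inner a b d)"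
  using inn_group_hom[OF inner_perm_in_inn_group] inner_perm_apply by (metis mult_closed)

lemma inner_ldiv:
  "a \<in> Q \<Longrightarrow> b \<in> Q \<Longrightarrow> c \<in> Q \<Longrightarrow> d \<in> Q \<Longrightarrow> inner a b (ld c d) = ld (inner a b c) (inner a b d)"
  using inn_group_ldiv[OF inner_perm_in_inn_group] inner_perm_apply by (metis ldiv_closed)

lemma inner_left_fixed: "a \<in> Q \<Longrightarrow> b \<in> Q \<Longrightarrow> inner a b a = a"
  unfolding inner_def using comm by (metis ldiv_mult mult_closed)

lemma inner_inner:
  assumes p: "p \<in> Q" and q: "q \<in> Q" and a: "a \<in> Q" and b: "b \<in> Q" and c: "c \<in> Q"
  shows "inner p q (inner a b c) = inner (inner p q a) (inner p q b) (inner p q c)"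
proof -
  have "inner p q (inner a b c) = ld (inner p q (m a b)) (inner p q (m a (m b c)))"
    unfolding inner_def[of a b c] using inner_ldiv p q a b c by simp
  also have "\<dots> = ld (m (inner p q a) (inner p q b))
                         (m (inner p q a) (m (inner p q b) (inner p q c)))"
    using inner_mult p q a b c by simp
  finally show ?thesis by (simp add: inner_def)
qed

subsection \<open>The upper central series\<close>

definition center_mod :: "'a set \<Rightarrow> 'a set" where
  "center_mod N = {a \<in> Q. \<forall>g\<in>inn_group Q m e. coset (g a) N = coset a N}"

lemma center_mod_closed: "a \<in> center_mod N \<Longrightarrow> a \<in> Q"
  unfolding center_mod_def by blast

context
  fixes N
  assumes N: "normal_subloop N"
begin

lemma center_modE:
  assumes "a \<in> center_mod N" "g \<in> inn_group Q m e"
  obtains n where "n \<in> N" "g a = m a n"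
proof -
  have aQ: "a \<in> Q" and "coset (g a) N = coset a N" using assms unfolding center_mod_def by auto
  then show ?thesis using that coset_eq_iff[OF N inn_group_closed[OF assms(2) aQ] aQ] by blast
qed

lemma center_mod_mult:
  assumes a: "a \<in> center_mod N" and b: "b \<in> center_mod N"
  shows "m a b \<in> center_mod N"
proof -
  have aQ: "a \<in> Q" and bQ: "b \<in> Q" using a b center_mod_closed by auto
  have "coset (g (m a b)) N = coset (m a b) N" if g: "g \<in> inn_group Q m e" for g
  proof -
    obtain n1 n2 where "n1 \<in> N" "n2 \<in> N" "g a = m a n1" "g b = m b n2"
      using center_modE[OF a g] center_modE[OF b g] by metis
    then show ?thesis using inn_group_hom[OF g aQ bQ] coset_mult_mult[OF N aQ bQ] by simp
  qed
  then show ?thesis unfolding center_mod_def using aQ bQ by auto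
qed

lemma center_mod_ldiv:
  assumes a: "a \<in> center_mod N" and b: "b \<in> center_mod N"
  shows "ld a b \<in> center_mod N"
proof -
  have aQ: "a \<in> Q" and bQ: "b \<in> Q" using a b center_mod_closed by auto
  have "coset (g (ld a b)) N = coset (ld a b) N" if g: "g \<in> inn_group Q m e" for g
  proof -
    obtain n1 n2 where n: "n1 \<in> N" "n2 \<in> N" "g a = m a n1" "g b = m b n2"
      using center_modE[OF a g] center_modE[OF b g] by metis
    define w where "w = g (ld a b)"
    have wQ: "w \<in> Q" unfolding w_def using inn_group_closed[OF g] aQ bQ by simp
    have w: "m (m a n1) w = m b n2"
      unfolding w_def using inn_group_ldiv[OF g aQ bQ] n aQ bQ normal_subloop_closed[OF N] by simp
    have "coset (m a w) N = coset (m (m a n1) (m w e)) N"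
      using coset_mult_mult[OF N aQ wQ n(1) normal_subloop_unit[OF N]] by simp
    also have "\<dots> = coset (m a (ld a b)) N" using w wQ coset_mult_right[OF N bQ n(2)] aQ bQ by simp
    finally show ?thesis
      using coset_left_mult_iff[OF N wQ ldiv_closed[OF aQ bQ] aQ] unfolding w_def by simp
  qed
  then show ?thesis unfolding center_mod_def using aQ bQ by auto
qed

lemma center_mod_inn:
  assumes f: "f \<in> inn_group Q m e" and a: "a \<in> center_mod N"
  shows "f a \<in> center_mod N"
proof -
  have "coset (g (f a)) N = coset (f a) N" if g: "g \<in> inn_group Q m e" for g
  proof -
    have "coset ((g \<circ> f) a) N = coset a N" "coset (f a) N = coset a N"
      using a inn_group_comp[OF g f] f unfolding center_mod_def by blast+
    then show ?thesis by simp
  qed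
  then show ?thesis unfolding center_mod_def
    using inn_group_closed[OF f] center_mod_closed[OF a] by auto
qed

lemma normal_subloop_center_mod: "normal_subloop (center_mod N)"
proof -
  have "e \<in> center_mod N" unfolding center_mod_def by (simp add: inn_group_unit)
  then show ?thesis
    unfolding normal_subloop_def
    using center_mod_closed center_mod_mult center_mod_ldiv center_mod_inn by blast
qed

end

abbreviation Z where "Z i \<equiv> upper_center Q m e i"

lemma upper_center_Suc_eq_center_mod: "normal_subloop (Z i) \<Longrightarrow> Z (Suc i) = center_mod (Z i)"
  using coset_in_quot_center_iff unfolding center_mod_def by (auto simp: Let_def)

declare upper_center.simps(2) [simp del]

lemma normal_subloop_upper_center: "normal_subloop (Z i)"
proof (induction i)
  case 0
  show ?case unfolding normal_subloop_def using inn_group_unit by (auto simp: ldiv_unique)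
next
  case (Suc i)
  then show ?case using upper_center_Suc_eq_center_mod normal_subloop_center_mod by simp
qed

lemma upper_center_Suc: "Z (Suc i) = center_mod (Z i)"
  using upper_center_Suc_eq_center_mod normal_subloop_upper_center by blast

lemma upper_center_closed: "a \<in> Z i \<Longrightarrow> a \<in> Q"
  using normal_subloop_closed[OF normal_subloop_upper_center] .

lemma inner_upper_center:
  assumes c: "c \<in> Z (Suc i)" and a: "a \<in> Q" and b: "b \<in> Q"
  shows "\<exists>s\<in>Z i. inner a b c = m c s"
proof -
  have cQ: "c \<in> Q" using upper_center_closed c .
  have "coset (inner_perm a b c) (Z i) = coset c (Z i)"
    using c inner_perm_in_inn_group[OF a b] upper_center_Suc unfolding center_mod_def by auto
  then show ?thesis
    using coset_eq_iff[OF normal_subloop_upper_center] inn_group_closed[OF inner_perm_in_inn_group]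
      inner_perm_apply a b cQ by metis
qed

lemma mem_center_iff: "z \<in> Z 1 \<longleftrightarrow> z \<in> Q \<and> (\<forall>g\<in>inn_group Q m e. g z = z)"
  using upper_center_Suc[of 0] inn_group_closed by (auto simp: center_mod_def lcoset_def)

lemma inner_center: "z \<in> Z 1 \<Longrightarrow> a \<in> Q \<Longrightarrow> b \<in> Q \<Longrightarrow> inner a b z = z"
  using inner_upper_center[of z 0 a b] upper_center_closed by simp

lemma center_subset_Z2: "Z 1 \<subseteq> Z 2"
proof
  fix z assume "z \<in> Z 1"
  then have "z \<in> Q" "\<forall>g\<in>inn_group Q m e. coset (g z) (Z 1) = coset z (Z 1)"
    using mem_center_iff by auto
  then show "z \<in> Z 2"
    using upper_center_Suc[of 1] by (simp add: center_mod_def numeral_2_eq_2)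
qed

lemma upper_center_unit [simp]: "e \<in> Z i"
  using normal_subloop_unit[OF normal_subloop_upper_center] .

lemma upper_center_mult [intro]: "a \<in> Z i \<Longrightarrow> b \<in> Z i \<Longrightarrow> m a b \<in> Z i"
  using normal_subloop_mult[OF normal_subloop_upper_center] .

lemma upper_center_ldiv [intro]: "a \<in> Z i \<Longrightarrow> b \<in> Z i \<Longrightarrow> ld a b \<in> Z i"
  using normal_subloop_ldiv[OF normal_subloop_upper_center] .

lemma inner_Z2: "s \<in> Z 2 \<Longrightarrow> a \<in> Q \<Longrightarrow> b \<in> Q \<Longrightarrow> \<exists>z\<in>Z 1. inner a b s = m s z"
  using inner_upper_center[of s 1 a b] by (simp add: numeral_2_eq_2)

lemma mult_assoc_center: "z \<in> Z 1 \<Longrightarrow> a \<in> Q \<Longrightarrow> b \<in> Q \<Longrightarrow> m a (m b z) = m (m a b) z"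
  using mult_inner[of a b z] inner_center[of z a b] upper_center_closed[of z] by simp

lemma mult_center_right_comm:
  assumes z: "z \<in> Z 1" and a: "a \<in> Q" and b: "b \<in> Q"
  shows "m (m a z) b = m (m a b) z"
proof -
  have zQ: "z \<in> Q" using upper_center_closed z .
  have "m (m a z) b = m b (m a z)" using comm a zQ b by simp
  also have "\<dots> = m (m b a) z" using mult_assoc_center z b a by simp
  also have "m b a = m a b" using comm a b by simp
  finally show ?thesis .
qed

lemma mult_mult_center:
  assumes s: "s \<in> Q" and t: "t \<in> Q" and z: "z \<in> Z 1" and w: "w \<in> Z 1"
  shows "m (m s z) (m t w) = m (m s t) (m z w)"
proof -
  have Q: "z \<in> Q" "w \<in> Q" using z w upper_center_closed by auto
  have "m (m s z) (m t w) = m (m (m s z) t) w" using mult_assoc_center w s t Q by simp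
  also have "\<dots> = m (m (m s t) z) w" using mult_center_right_comm z s t by simp
  also have "\<dots> = m (m s t) (m z w)" using mult_assoc_center[OF w] s t Q by simp
  finally show ?thesis .
qed

lemma center_assoc: "x \<in> Z 1 \<Longrightarrow> y \<in> Z 1 \<Longrightarrow> z \<in> Z 1 \<Longrightarrow> m (m x y) z = m x (m y z)"
  using mult_assoc_center upper_center_closed by simp

lemma center_comm: "x \<in> Z 1 \<Longrightarrow> y \<in> Z 1 \<Longrightarrow> m x y = m y x"
  using comm upper_center_closed by simp

lemma center_left_commute: "x \<in> Z 1 \<Longrightarrow> y \<in> Z 1 \<Longrightarrow> z \<in> Z 1 \<Longrightarrow> m x (m y z) = m y (m x z)"
  by (metis center_assoc center_comm)

lemma center_cancel: "x \<in> Z 1 \<Longrightarrow> y \<in> Z 1 \<Longrightarrow> z \<in> Z 1 \<Longrightarrow> m x y = m x z \<Longrightarrow> y = z"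
  using left_cancel upper_center_closed by blast

lemma center_inverse_unique:
  "x \<in> Z 1 \<Longrightarrow> y \<in> Z 1 \<Longrightarrow> z \<in> Z 1 \<Longrightarrow> m x y = e \<Longrightarrow> m x z = e \<Longrightarrow> y = z"
  using center_cancel by simp

lemma inner_mult_center_left:
  assumes a: "a \<in> Q" and b: "b \<in> Q" and c: "c \<in> Q" and z: "z \<in> Z 1"
  shows "inner (m a z) b c = inner a b c"
proof -
  have zQ: "z \<in> Q" using upper_center_closed z .
  have "m (m (m a z) b) (inner a b c) = m (m (m a b) z) (inner a b c)"
    using mult_center_right_comm z a b by simp
  also have "\<dots> = m (m (m a b) (inner a b c)) z"
    using mult_center_right_comm[OF z, of "m a b" "inner a b c"] a b c by simp
  also have "\<dots> = m (m a (m b c)) z" using mult_inner a b c by simp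
  also have "\<dots> = m (m a z) (m b c)" using mult_center_right_comm[OF z, of a "m b c"] a b c by simp
  finally show ?thesis unfolding inner_def[of "m a z"] using ldiv_unique a b c zQ by simp
qed

lemma inner_mult_center_right:
  assumes a: "a \<in> Q" and b: "b \<in> Q" and c: "c \<in> Q" and z: "z \<in> Z 1"
  shows "inner a (m b z) c = inner a b c"
proof -
  have zQ: "z \<in> Q" using upper_center_closed z .
  have "m (m a (m b z)) (inner a b c) = m (m (m a b) z) (inner a b c)"
    using mult_assoc_center z a b by simp
  also have "\<dots> = m (m (m a b) (inner a b c)) z"
    using mult_center_right_comm[OF z, of "m a b" "inner a b c"] a b c by simp
  also have "\<dots> = m (m a (m b c)) z" using mult_inner a b c by simp
  also have "\<dots> = m a (m (m b c) z)" using mult_assoc_center[OF z, of a "m b c"] a b c by simp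
  also have "\<dots> = m a (m (m b z) c)" using mult_center_right_comm z b c by simp
  finally show ?thesis unfolding inner_def[of a "m b z"] using ldiv_unique a b c zQ by simp
qed

subsection \<open>The deviation of an inner mapping\<close>

definition delta :: "'a \<Rightarrow> 'a \<Rightarrow> 'a \<Rightarrow> 'a" where
  "delta a b c = ld c (inner a b c)"

abbreviation assoc where "assoc a b c \<equiv> associator Q m a b c"

lemma delta_closed [intro, simp]: "a \<in> Q \<Longrightarrow> b \<in> Q \<Longrightarrow> c \<in> Q \<Longrightarrow> delta a b c \<in> Q"
  unfolding delta_def by simp

lemma inner_eq_delta: "a \<in> Q \<Longrightarrow> b \<in> Q \<Longrightarrow> c \<in> Q \<Longrightarrow> inner a b c = m c (delta a b c)"
  unfolding delta_def by simp

lemma associator_closed [intro, simp]: "a \<in> Q \<Longrightarrow> b \<in> Q \<Longrightarrow> c \<in> Q \<Longrightarrow> assoc a b c \<in> Q"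
  unfolding associator_def by simp

lemma mult_associator:
  "a \<in> Q \<Longrightarrow> b \<in> Q \<Longrightarrow> c \<in> Q \<Longrightarrow> m (m a (m b c)) (assoc a b c) = m (m a b) c"
  unfolding associator_def by simp

lemma delta_Z2:
  assumes "a \<in> Q" "b \<in> Q" "s \<in> Z 2"
  shows "delta a b s \<in> Z 1"
proof -
  obtain z where "z \<in> Z 1" "inner a b s = m s z" using inner_Z2 assms by blast
  then show ?thesis unfolding delta_def using assms upper_center_closed by simp
qed

lemma delta_center: "z \<in> Z 1 \<Longrightarrow> a \<in> Q \<Longrightarrow> b \<in> Q \<Longrightarrow> delta a b z = e"
  unfolding delta_def using inner_center upper_center_closed by (simp add: ldiv_unique)

lemma delta_left_fixed: "a \<in> Q \<Longrightarrow> b \<in> Q \<Longrightarrow> delta a b a = e"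
  unfolding delta_def using inner_left_fixed by (simp add: ldiv_unique)

lemma delta_mult_center_right:
  "a \<in> Q \<Longrightarrow> b \<in> Q \<Longrightarrow> c \<in> Q \<Longrightarrow> z \<in> Z 1 \<Longrightarrow> delta a (m b z) c = delta a b c"
  unfolding delta_def using inner_mult_center_right by simp

lemma mult_assoc_delta:
  assumes a: "a \<in> Q" and b: "b \<in> Q" and s: "s \<in> Z 2"
  shows "m a (m b s) = m (m (m a b) s) (delta a b s)"
proof -
  have sQ: "s \<in> Q" using upper_center_closed s .
  have "m a (m b s) = m (m a b) (m s (delta a b s))"
    using mult_inner[OF a b sQ] inner_eq_delta[OF a b sQ] by simp
  also have "\<dots> = m (m (m a b) s) (delta a b s)"
    using mult_assoc_center delta_Z2[OF a b s] a b sQ by simp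
  finally show ?thesis .
qed

lemma mult_assoc_delta_swap:
  assumes p: "p \<in> Q" and q: "q \<in> Q" and s: "s \<in> Z 2"
  shows "m (m p s) q = m (m (m p q) s) (delta q p s)"
proof -
  have sQ: "s \<in> Q" using upper_center_closed s .
  have "m (m p s) q = m q (m p s)" using comm p q sQ by simp
  also have "\<dots> = m (m (m q p) s) (delta q p s)" using mult_assoc_delta q p s by simp
  also have "m q p = m p q" using comm p q by simp
  finally show ?thesis .
qed

lemma delta_mult:
  assumes a: "a \<in> Q" and b: "b \<in> Q" and c: "c \<in> Q" and d: "d \<in> Q"
    and zc: "delta a b c \<in> Z 1" and zd: "delta a b d \<in> Z 1"
  shows "delta a b (m c d) = m (delta a b c) (delta a b d)"
proof -
  have "inner a b (m c d) = m (m c (delta a b c)) (m d (delta a b d))"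
    using inner_mult a b c d inner_eq_delta by simp
  also have "\<dots> = m (m c d) (m (delta a b c) (delta a b d))"
    using mult_mult_center c d zc zd by simp
  finally show ?thesis
    unfolding delta_def using a b c d zc zd upper_center_closed by simp
qed

lemma delta_vanish_of_mult:
  assumes a: "a \<in> Q" and b: "b \<in> Q" and v: "v \<in> Q" and w: "w \<in> Q"
    and ev: "delta a b v \<in> Z 1" and ew: "delta a b w \<in> Z 1" and vw: "m v w \<in> Z 1"
    and k: "delta a b w = e"
  shows "delta a b v = e"
proof -
  have "e = delta a b (m v w)" using delta_center[OF vw a b] by simp
  also have "\<dots> = m (delta a b v) (delta a b w)" using delta_mult[OF a b v w ev ew] .
  also have "\<dots> = delta a b v" using k upper_center_closed ev by simp
  finally show ?thesis by simp
qed

lemma delta_inverse: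
  assumes a: "a \<in> Q" and b: "b \<in> Q" and v: "v \<in> Z 2" and w: "w \<in> Z 2" and vw: "m v w \<in> Z 1"
  shows "m (delta a b v) (delta a b w) = e"
  using delta_mult[OF a b upper_center_closed[OF v] upper_center_closed[OF w] delta_Z2[OF a b v]
      delta_Z2[OF a b w]] delta_center[OF vw a b] by simp

lemma delta_eq_of_inverse:
  assumes a: "a \<in> Q" and b: "b \<in> Q" and v: "v \<in> Z 2" and w: "w \<in> Z 2" and y: "y \<in> Z 2"
    and yv: "m y v \<in> Z 1" and wy: "m w y \<in> Z 1"
  shows "delta a b v = delta a b w"
proof -
  have Z: "delta a b v \<in> Z 1" "delta a b w \<in> Z 1" "delta a b y \<in> Z 1"
    using delta_Z2 a b v w y by auto
  have "m (delta a b y) (delta a b v) = e" using delta_inverse a b y v yv .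
  moreover have "m (delta a b y) (delta a b w) = e"
    using delta_inverse[OF a b w y wy] center_comm[OF Z(2,3)] by simp
  ultimately show ?thesis
    using center_inverse_unique[OF Z(3,1,2)] by blast
qed

lemma delta_assoc_inverse:
  assumes a: "a \<in> Q" and b: "b \<in> Q" and u: "u \<in> Z 2"
  shows "m (delta a b u) (assoc a b u) = e"
proof -
  have uQ: "u \<in> Q" using upper_center_closed u .
  define X where "X = m (m a b) u"
  define D where "D = delta a b u"
  have D: "D \<in> Z 1" unfolding D_def using delta_Z2 a b u .
  have DQ: "D \<in> Q" and XQ: "X \<in> Q" unfolding X_def using upper_center_closed D a b uQ by auto
  have "m (m X D) (assoc a b u) = X"
    using mult_associator[OF a b uQ] mult_assoc_delta[OF a b u] unfolding X_def D_def by simp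
  moreover have "m (m X D) (ld D e) = X"
    using mult_assoc_center[OF upper_center_ldiv[OF D upper_center_unit] XQ DQ] DQ XQ by simp
  ultimately have "assoc a b u = ld D e"
    using left_cancel[of "m X D" "assoc a b u" "ld D e"] XQ DQ a b uQ by simp
  then show ?thesis unfolding D_def[symmetric] using DQ by simp
qed

lemma associator_eq_of_delta_eq:
  assumes "a \<in> Q" "b \<in> Q" "c \<in> Q" "d \<in> Q" "u \<in> Z 2" "v \<in> Z 2"
    and "delta a b u = delta c d v"
  shows "assoc a b u = assoc c d v"
  using delta_assoc_inverse[of a b u] delta_assoc_inverse[of c d v] assms
    left_cancel[of "delta a b u" "assoc a b u" "assoc c d v"] upper_center_closed by simp

lemma assoc_eq_of_delta_vanish:
  assumes a: "a \<in> Q" and s: "s \<in> Z 2" and t: "t \<in> Z 2" and k: "delta a s t = e"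
  shows "m (m a s) t = m a (m s t)"
proof -
  have sQ: "s \<in> Q" and tQ: "t \<in> Q" using s t upper_center_closed by auto
  have "assoc a s t = e" using delta_assoc_inverse[OF a sQ t] k a sQ tQ by simp
  then show ?thesis using mult_associator[OF a sQ tQ] a sQ tQ by simp
qed

lemma delta_middle_eq:
  assumes a: "a \<in> Q" and c: "c \<in> Q" and s: "s \<in> Z 2"
  shows "delta a s c = ld (delta c a s) (delta a c s)"
proof -
  have sQ: "s \<in> Q" using upper_center_closed s .
  have D1: "delta c a s \<in> Z 1" and D2: "delta a c s \<in> Z 1" using delta_Z2 a c s by auto
  define \<xi> where "\<xi> = ld (delta c a s) (delta a c s)"
  have xi: "\<xi> \<in> Z 1" unfolding \<xi>_def using D1 D2 by blast
  have xiQ: "\<xi> \<in> Q" using upper_center_closed xi .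
  have "m (m a s) (m c \<xi>) = m (m (m a s) c) \<xi>" using mult_assoc_center xi a sQ c by simp
  also have "\<dots> = m (m (m (m a c) s) (delta c a s)) \<xi>" using mult_assoc_delta_swap a c s by simp
  also have "\<dots> = m (m (m a c) s) (m (delta c a s) \<xi>)"
    using mult_assoc_center[OF xi] D1 upper_center_closed a c sQ by simp
  also have "m (delta c a s) \<xi> = delta a c s" unfolding \<xi>_def
    using D1 D2 upper_center_closed by simp
  also have "m (m (m a c) s) (delta a c s) = m a (m c s)" using mult_assoc_delta a c s by simp
  also have "\<dots> = m a (m s c)" using comm c sQ by simp
  finally have "inner a s c = m c \<xi>"
    unfolding inner_def using a sQ c xiQ by (intro ldiv_unique) auto
  then have "delta a s c = \<xi>" unfolding delta_def using c xiQ by simp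
  then show ?thesis unfolding \<xi>_def .
qed

lemma delta_middle_center:
  assumes "a \<in> Q" "c \<in> Q" "s \<in> Z 2"
  shows "delta a s c \<in> Z 1"
  unfolding delta_middle_eq[OF assms] using delta_Z2 assms by blast

lemma delta_cycle:
  assumes "a \<in> Q" "c \<in> Q" "s \<in> Z 2"
  shows "m (delta c a s) (delta a s c) = delta a c s"
  unfolding delta_middle_eq[OF assms] using delta_Z2[of c a s] delta_Z2[of a c s] assms
    upper_center_closed by simp

lemma delta_middle_antisym:
  assumes a: "a \<in> Q" and c: "c \<in> Q" and s: "s \<in> Z 2"
  shows "m (delta a s c) (delta c s a) = e"
proof -
  let ?x = "delta c a s" and ?y = "delta a s c" and ?w = "delta a c s" and ?z = "delta c s a"
  have Z: "?x \<in> Z 1" "?y \<in> Z 1" "?w \<in> Z 1" "?z \<in> Z 1"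
    using delta_Z2 delta_middle_center a c s by auto
  have "m ?x (m ?y ?z) = m (m ?x ?y) ?z" using center_assoc Z by simp
  also have "\<dots> = ?x" using delta_cycle[OF a c s] delta_cycle[OF c a s] by simp
  also have "\<dots> = m ?x e" using upper_center_closed Z by simp
  finally show ?thesis
    using center_cancel[OF Z(1) upper_center_mult[OF Z(2,4)] upper_center_unit] by simp
qed

lemma delta_vanish_transfer:
  assumes a: "a \<in> Q" and s: "s \<in> Z 2" and v: "v \<in> Q" and w: "w \<in> Q"
    and vw: "m v w \<in> Z 1" and k: "delta a s w = e"
  shows "delta a s v = e"
  using delta_vanish_of_mult[OF a upper_center_closed[OF s] v w delta_middle_center[OF a v s]
      delta_middle_center[OF a w s] vw k] .

text \<open>L(p,q) maps a and s to central translates of themselves, so it commutes with L(a,s).\<close>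

lemma delta_delta_vanish:
  assumes p: "p \<in> Q" and q: "q \<in> Q" and a: "a \<in> Q" and s: "s \<in> Z 2" and z: "z \<in> Z 1"
    and pqa: "inner p q a = m a z" and c: "c \<in> Q"
  shows "delta a s (delta p q c) = e"
proof -
  have sQ: "s \<in> Q" using upper_center_closed s .
  obtain z' where z': "z' \<in> Z 1" "inner p q s = m s z'" using inner_Z2[OF s p q] by blast
  have pqc: "inner p q c \<in> Q" using p q c by simp
  have "inner p q (inner a s c) = inner (inner p q a) (inner p q s) (inner p q c)"
    by (rule inner_inner[OF p q a sQ c])
  also have "\<dots> = inner a s (inner p q c)"
    using pqa z' inner_mult_center_left inner_mult_center_right a sQ z pqc upper_center_closed
    by simp
  finally have comm_inner: "inner p q (inner a s c) = inner a s (inner p q c)" .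
  have xc: "delta a s c \<in> Z 1" using delta_middle_center[OF a c s] .
  have xG: "delta a s (inner p q c) \<in> Z 1" using delta_middle_center[OF a pqc s] .
  have "m (inner p q c) (delta a s (inner p q c)) = m (inner p q c) (delta a s c)"
    using comm_inner inner_eq_delta[OF a sQ c] inner_eq_delta[OF a sQ pqc] inner_mult[OF p q c]
      inner_center[OF xc p q] upper_center_closed[OF xc] by simp
  then have 2: "delta a s (inner p q c) = delta a s c"
    using left_cancel pqc upper_center_closed xG xc by blast
  have ep: "delta p q c \<in> Q" using p q c by simp
  have xe: "delta a s (delta p q c) \<in> Z 1" using delta_middle_center[OF a ep s] .
  have "delta a s (inner p q c) = m (delta a s c) (delta a s (delta p q c))"
    using inner_eq_delta[OF p q c] delta_mult[OF a sQ c ep xc xe] by simp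
  then have "m (delta a s c) (delta a s (delta p q c)) = m (delta a s c) e"
    using 2 xc upper_center_closed by simp
  then show ?thesis using center_cancel xc xe upper_center_unit by blast
qed

lemma delta_delta_self:
  "a \<in> Q \<Longrightarrow> b \<in> Q \<Longrightarrow> c \<in> Q \<Longrightarrow> s \<in> Z 2 \<Longrightarrow> delta a s (delta a b c) = e"
  using delta_delta_vanish[of a b a s e c] inner_left_fixed by simp

lemma inner_cocycle:
  assumes a: "a \<in> Q" and b: "b \<in> Q" and c: "c \<in> Q" and w: "w \<in> Q"
  shows "inner a (m b c) (inner b c w) = inner (m a b) (inner a b c) (inner a b w)"
proof -
  have "m (m a (m b c)) (inner a (m b c) (inner b c w)) = m a (m b (m c w))"
    using mult_inner[OF a _ inner_closed[OF b c w]] mult_inner[OF b c w] b c by simp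
  also have "\<dots> = m (m (m a b) (inner a b c)) (inner (m a b) (inner a b c) (inner a b w))"
    using mult_inner[OF a b] inner_mult[OF a b c w] mult_inner[OF _ inner_closed inner_closed]
      a b c w
    by simp
  also have "m (m a b) (inner a b c) = m a (m b c)" using mult_inner[OF a b c] by simp
  finally show ?thesis using left_cancel[of "m a (m b c)"] a b c w by simp
qed

lemma delta_cocycle:
  assumes a: "a \<in> Q" and b: "b \<in> Q" and c: "c \<in> Q" and u: "u \<in> Z 2"
  shows "m (delta a (m b c) u) (delta b c u) = m (delta (m a b) (inner a b c) u) (delta a b u)"
proof -
  have uQ: "u \<in> Q" using upper_center_closed u .
  have inner_delta: "inner p q (inner r s u) = m u (m (delta p q u) (delta r s u))"
    if "p \<in> Q" "q \<in> Q" "r \<in> Q" "s \<in> Q" for p q r s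
  proof -
    have k: "delta r s u \<in> Z 1" "delta p q u \<in> Z 1" using delta_Z2 that u by auto
    have "inner p q (inner r s u) = m (inner p q u) (delta r s u)"
      using inner_eq_delta inner_mult inner_center[OF k(1)] that uQ upper_center_closed[OF k(1)]
        by simp
    also have "\<dots> = m u (m (delta p q u) (delta r s u))"
      using inner_eq_delta mult_assoc_center[OF k(1)] that uQ upper_center_closed[OF k(2)] by simp
    finally show ?thesis .
  qed
  have "m u (m (delta a (m b c) u) (delta b c u)) =
        m u (m (delta (m a b) (inner a b c) u) (delta a b u))"
    using inner_cocycle[OF a b c uQ] inner_delta a b c by simp
  then show ?thesis using left_cancel uQ a b c by (metis delta_closed mult_closed inner_closed)
qed

lemma delta_shift_right:
  assumes p: "p \<in> Q" and q: "q \<in> Q" and s: "s \<in> Z 2" and u: "u \<in> Z 2"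
    and qs: "delta q s u = e" and pqs: "delta (m p q) s u = e"
  shows "delta p (m q s) u = delta p q u"
proof -
  have sQ: "s \<in> Q" using upper_center_closed s .
  have "m (delta p (m q s) u) (delta q s u) = m (delta (m p q) (inner p q s) u) (delta p q u)"
    using delta_cocycle[OF p q sQ u] .
  also have "delta (m p q) (inner p q s) u = delta (m p q) s u"
    using inner_eq_delta delta_mult_center_right delta_Z2 p q s sQ upper_center_closed[OF u] by simp
  finally show ?thesis using qs pqs p q sQ upper_center_closed[OF u] by simp
qed

lemma delta_shift_left:
  assumes p: "p \<in> Q" and q: "q \<in> Q" and s: "s \<in> Z 2" and u: "u \<in> Z 2"
    and ps: "delta p s u = e" and qps: "delta (m q p) s u = e" and qus: "delta q u s = e"
  shows "delta (m p s) q u = delta p q u"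
proof -
  have sQ: "s \<in> Q" and uQ: "u \<in> Q" using upper_center_closed s u by auto
  have psQ: "m p s \<in> Q" using p sQ by simp
  have Z: "delta p q u \<in> Z 1" "delta q u p \<in> Z 1" "delta (m p s) u q \<in> Z 1"
    using delta_Z2 delta_middle_center p q u psQ by auto
  have "delta q u (m p s) = m (delta q u p) (delta q u s)"
    using delta_mult[OF q uQ p sQ delta_middle_center[OF q p u] delta_middle_center[OF q sQ u]] .
  then have "delta q u (m p s) = delta q u p" using qus Z upper_center_closed by simp
  then have cancel: "m (delta q u p) (delta (m p s) u q) = e"
    using delta_middle_antisym[OF psQ q u] center_comm[OF Z(2,3)] by simp
  have "delta (m p s) q u = m (delta q (m p s) u) (delta (m p s) u q)"
    using delta_cycle[OF psQ q u] by simp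
  also have "\<dots> = m (m (delta p q u) (delta q u p)) (delta (m p s) u q)"
    using delta_shift_right[OF q p s u ps qps] delta_cycle[OF q p u] by simp
  also have "\<dots> = delta p q u"
    using center_assoc[OF Z] cancel upper_center_closed[OF Z(1)] by simp
  finally show ?thesis .
qed

lemma center_of_mult_eq:
  assumes X: "X \<in> Q" and P: "P \<in> Q" and c: "c \<in> Q" and k1: "k1 \<in> Z 1" and k2: "k2 \<in> Z 1"
    and Xk1: "X = m P k1" and Xc: "m X c = m P k2"
  shows "c \<in> Z 1"
proof -
  define K where "K = ld k2 k1"
  have K: "K \<in> Z 1" unfolding K_def using k1 k2 by blast
  have kQ: "k1 \<in> Q" "k2 \<in> Q" "K \<in> Q" using k1 k2 K upper_center_closed by auto
  have "m X (m c K) = m (m X c) K" using mult_assoc_center[OF K] X c by simp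
  also have "\<dots> = m P (m k2 K)" using Xc mult_assoc_center[OF K] P kQ by simp
  also have "\<dots> = m X e" using Xk1 X kQ unfolding K_def by simp
  finally have "m K c = e" using left_cancel X c kQ comm by (metis mult_closed unit_closed)
  then have "c = ld K e" using ldiv_unique kQ c by simp
  then show ?thesis using upper_center_ldiv[OF K upper_center_unit] by simp
qed

definition delta_kernel :: "'a \<Rightarrow> 'a set" where
  "delta_kernel u = {a \<in> Q. \<forall>s\<in>Z 2. delta a s u = e}"

lemma delta_kernel_closed: "a \<in> delta_kernel u \<Longrightarrow> a \<in> Q"
  unfolding delta_kernel_def by blast

lemma delta_kernel_vanish: "a \<in> delta_kernel u \<Longrightarrow> s \<in> Z 2 \<Longrightarrow> delta a s u = e"
  unfolding delta_kernel_def by blast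

lemma delta_kernel_mult:
  assumes u: "u \<in> Z 2" and a: "a \<in> delta_kernel u" and b: "b \<in> delta_kernel u"
  shows "m a b \<in> delta_kernel u"
proof -
  have uQ: "u \<in> Q" and aQ: "a \<in> Q" and bQ: "b \<in> Q"
    using u a b upper_center_closed delta_kernel_closed by auto
  have "delta (m a b) s u = e" if s: "s \<in> Z 2" for s
  proof -
    have "delta u s a = e" "delta u s b = e"
      using delta_middle_antisym[OF aQ uQ s] delta_middle_antisym[OF bQ uQ s]
        delta_kernel_vanish[OF a s] delta_kernel_vanish[OF b s] uQ aQ bQ upper_center_closed[OF s]
      by simp_all
    then have "delta u s (m a b) = e"
      using delta_mult[OF uQ upper_center_closed[OF s] aQ bQ delta_middle_center[OF uQ aQ s]
          delta_middle_center[OF uQ bQ s]] by simp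
    then show ?thesis
      using delta_middle_antisym[OF mult_closed[OF aQ bQ] uQ s]
        delta_middle_center[OF mult_closed[OF aQ bQ] uQ s] upper_center_closed by simp
  qed
  then show ?thesis unfolding delta_kernel_def using aQ bQ by blast
qed

lemma delta_kernel_transfer:
  assumes "v \<in> Q" "w \<in> Q" "m v w \<in> Z 1" "a \<in> delta_kernel w"
  shows "a \<in> delta_kernel v"
  using assms delta_vanish_transfer unfolding delta_kernel_def by blast

lemma delta_kernel_delta:
  assumes "p \<in> Q" "q \<in> Q" "a \<in> Q" "c \<in> Q" "z \<in> Z 1" "inner p q a = m a z"
  shows "a \<in> delta_kernel (delta p q c)"
  using assms delta_delta_vanish unfolding delta_kernel_def by blast

lemma delta_swap_of_mult_swap:
  assumes x: "x \<in> Q" and y: "y \<in> Q" and u: "u \<in> Z 2"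
    and swap: "delta x (m x y) u = delta (m x y) x u"
  shows "delta x y u = delta y x u"
proof -
  have uQ: "u \<in> Q" using upper_center_closed u .
  have Z: "delta (m x y) x u \<in> Z 1" "delta x u (m x y) \<in> Z 1"
    "delta x u x \<in> Z 1" "delta x u y \<in> Z 1"
    using delta_Z2 delta_middle_center x y u by auto
  have "m (delta (m x y) x u) (delta x u (m x y)) = m (delta (m x y) x u) e"
    using delta_cycle[OF x mult_closed[OF x y] u] swap Z upper_center_closed by simp
  then have "delta x u (m x y) = e" using center_cancel Z(1,2) upper_center_unit by blast
  moreover have "delta x u (m x y) = m (delta x u x) (delta x u y)"
    using delta_mult[OF x uQ x y Z(3,4)] .
  ultimately have "delta x u y = e" using delta_left_fixed[OF x uQ] Z upper_center_closed by simp
  then show ?thesis using delta_cycle[OF x y u] Z delta_Z2 x y u upper_center_closed by simp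
qed

lemma center_cancel_squares:
  assumes Z: "a1 \<in> Z 1" "a2 \<in> Z 1" "a3 \<in> Z 1" "b1 \<in> Z 1" "b2 \<in> Z 1" "f \<in> Z 1"
    and eq: "m (m a1 a2) a3 = m (m b1 b1) (m (m b2 b2) f)"
    and b1b2: "m b1 b2 = m a1 a3" and a3f: "m a3 f = e"
  shows "a2 = a1"
proof -
  note ac = center_assoc center_comm center_left_commute upper_center_mult
  have "m (m a1 a3) a2 = m (m a1 a2) a3" using Z by (simp add: ac)
  also have "\<dots> = m (m (m b1 b2) (m b1 b2)) f" using eq Z by (simp add: ac)
  also have "\<dots> = m (m a1 a3) (m a1 (m a3 f))" using b1b2 Z by (simp add: ac)
  also have "\<dots> = m (m a1 a3) a1" using a3f Z upper_center_closed by simp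
  finally show ?thesis using center_cancel Z upper_center_mult by blast
qed

lemma delta_eq_of_inverse_partners:
  assumes "a \<in> Q" "b \<in> Q" "c \<in> Q" "d \<in> Q" "u \<in> Z 2" "v \<in> Z 2" "u' \<in> Z 2" "v' \<in> Z 2"
    and "m u v \<in> Z 1" "m u' v' \<in> Z 1" and "delta a b v = delta c d v'"
  shows "delta a b u = delta c d u'"
proof -
  have Z: "delta a b u \<in> Z 1" "delta a b v \<in> Z 1" "delta c d u' \<in> Z 1" "delta c d v' \<in> Z 1"
    using delta_Z2 assms by auto
  have "m (delta a b v) (delta a b u) = e"
    using delta_inverse[OF assms(1,2,5,6,9)] center_comm[OF Z(1,2)] by simp
  moreover have "m (delta a b v) (delta c d u') = e"
    using delta_inverse[OF assms(3,4,7,8,10)] center_comm[OF Z(3,4)] assms(11) by simp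
  ultimately show ?thesis using center_inverse_unique[OF Z(2,1,3)] by blast
qed

end

subsection \<open>Loops of nilpotency class 3\<close>

locale class3_aut_comm_loop = aut_comm_loop +
  assumes class3: "upper_center Q m e 3 = Q"
begin

lemma delta_in_Z2:
  assumes "a \<in> Q" "b \<in> Q" "c \<in> Q"
  shows "delta a b c \<in> Z 2"
proof -
  obtain s where "s \<in> Z 2" "inner a b c = m c s"
    using inner_upper_center[of c 2 a b] class3 assms by (auto simp: numeral_3_eq_3 numeral_2_eq_2)
  then show ?thesis unfolding delta_def using assms upper_center_closed by simp
qed

lemma associator_delta_center:
  assumes a: "a \<in> Q" and b: "b \<in> Q" and c: "c \<in> Q"
  shows "m (assoc a b c) (delta a b c) \<in> Z 1"
proof -
  define \<epsilon> where "\<epsilon> = delta a b c"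
  define X where "X = m (m a b) c"
  define A where "A = assoc a b c"
  have eps: "\<epsilon> \<in> Z 2" unfolding \<epsilon>_def using delta_in_Z2 a b c by simp
  have Q: "\<epsilon> \<in> Q" "X \<in> Q" "A \<in> Q" "m a b \<in> Q"
    unfolding X_def A_def using upper_center_closed eps a b c by auto
  define D1 where "D1 = delta (m a b) c \<epsilon>"
  define D2 where "D2 = delta A X \<epsilon>"
  define D3 where "D3 = delta X A \<epsilon>"
  have D: "D1 \<in> Z 1" "D2 \<in> Z 1" "D3 \<in> Z 1"
    unfolding D1_def D2_def D3_def using delta_Z2 eps Q c by auto
  define P where "P = m (m X A) \<epsilon>"
  have "m (m a (m b c)) A = X" unfolding X_def A_def using mult_associator a b c by simp
  moreover have "m a (m b c) = m (m X \<epsilon>) D1"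
    unfolding \<epsilon>_def X_def D1_def
    using mult_inner[OF a b c] inner_eq_delta[OF a b c]
      mult_assoc_delta[OF Q(4) c eps[unfolded \<epsilon>_def]]
    by simp
  ultimately have "X = m (m (m X \<epsilon>) A) D1" using mult_center_right_comm[OF D(1)] Q by simp
  also have "\<dots> = m P (m D2 D1)"
    unfolding P_def D2_def using mult_assoc_delta_swap[OF Q(2,3) eps] mult_assoc_center[OF D(1)] Q
      upper_center_closed D by simp
  finally have "X = m P (m D2 D1)" .
  moreover have "m X (m A \<epsilon>) = m P D3" unfolding P_def D3_def
    using mult_assoc_delta[OF Q(2,3) eps] .
  moreover have "P \<in> Q" "m A \<epsilon> \<in> Q" unfolding P_def using Q by auto
  ultimately have "m A \<epsilon> \<in> Z 1"
    using center_of_mult_eq[OF Q(2) _ _ upper_center_mult[OF D(2,1)] D(3)] by blast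
  then show ?thesis unfolding A_def \<epsilon>_def .
qed

lemma associator_Z2:
  assumes "a \<in> Q" "b \<in> Q" "c \<in> Q"
  shows "assoc a b c \<in> Z 2"
proof -
  have "m (delta a b c) (assoc a b c) \<in> Z 2"
    using associator_delta_center[OF assms] comm[of "delta a b c"] center_subset_Z2 assms by auto
  then have "ld (delta a b c) (m (delta a b c) (assoc a b c)) \<in> Z 2"
    using delta_in_Z2[OF assms] by blast
  then show ?thesis using assms by simp
qed

lemma associator_reverse_center:
  assumes a: "a \<in> Q" and b: "b \<in> Q" and c: "c \<in> Q"
  shows "m (assoc a b c) (assoc c b a) \<in> Z 1"
proof -
  define X where "X = m (m a b) c"
  define A where "A = assoc a b c"
  define B where "B = assoc c b a"
  have XQ: "X \<in> Q" unfolding X_def using a b c by simp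
  have A: "A \<in> Z 2" and B: "B \<in> Z 2" unfolding A_def B_def using associator_Z2 a b c by auto
  have AQ: "A \<in> Q" and BQ: "B \<in> Q" using A B upper_center_closed by auto
  have XA: "m (m a (m b c)) A = X" unfolding X_def A_def using mult_associator a b c by simp
  have "m (m c (m b a)) B = m (m c b) a" unfolding B_def using mult_associator a b c by simp
  then have XB: "m X B = m a (m b c)" unfolding X_def using comm a b c by simp
  have "m X (m B A) = m (m (m X B) A) (delta X B A)" using mult_assoc_delta[OF XQ BQ A] by simp
  also have "\<dots> = m X (delta X B A)" using XA XB by simp
  finally have "m B A = delta X B A" using left_cancel XQ AQ BQ by (meson delta_closed mult_closed)
  then have "m B A \<in> Z 1" using delta_Z2 XQ BQ A by simp
  then show ?thesis unfolding A_def B_def using comm AQ BQ A_def B_def by simp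
qed

lemma delta_vanish_cross:
  assumes a: "a \<in> Q" and b: "b \<in> Q" and c: "c \<in> Q" and s: "s \<in> Z 2"
  shows "delta c s (delta a b c) = e"
proof -
  have "delta c s (delta c b a) = e" using delta_delta_self c b a s .
  then have "delta c s (assoc c b a) = e"
    using delta_vanish_transfer[OF c s _ _ associator_delta_center[OF c b a]] a b c by simp
  then have "delta c s (assoc a b c) = e"
    using delta_vanish_transfer[OF c s _ _ associator_reverse_center[OF a b c]] a b c by simp
  moreover have "m (delta a b c) (assoc a b c) \<in> Z 1"
    using associator_delta_center[OF a b c] comm[of "assoc a b c" "delta a b c"] a b c by simp
  ultimately show ?thesis
    using delta_vanish_transfer[OF c s delta_closed[OF a b c] associator_closed[OF a b c]] by blast
qed

lemma delta_delta_exchange: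
  assumes x: "x \<in> Q" and y: "y \<in> Q"
  shows "delta x y (delta x x y) = delta x x (delta x y y)"
proof -
  define e1 where "e1 = delta x y y"
  define e2 where "e2 = delta x x y"
  have ee: "e1 \<in> Z 2" "e2 \<in> Z 2" unfolding e1_def e2_def using delta_in_Z2 x y by auto
  have eQ: "e1 \<in> Q" "e2 \<in> Q" using ee upper_center_closed by auto
  have d: "delta x y e2 \<in> Z 1" "delta x x e1 \<in> Z 1" using delta_Z2 x y ee by auto
  have "m (m y e1) e2 = m y (m e1 e2)"
    using assoc_eq_of_delta_vanish[OF y ee] delta_vanish_cross[OF x x y ee(1)]
      unfolding e2_def by simp
  moreover have "m (m y e2) e1 = m y (m e2 e1)"
    using assoc_eq_of_delta_vanish[OF y ee(2,1)] delta_vanish_cross[OF x y y ee(2)]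
      unfolding e1_def by simp
  moreover have "inner x y (inner x x y) = inner x x (inner x y y)"
    using inner_inner[OF x y x x y] inner_left_fixed[OF x y] by simp
  then have "m (m y e1) (m e2 (delta x y e2)) = m (m y e2) (m e1 (delta x x e1))"
    unfolding e1_def e2_def using inner_eq_delta inner_mult x y by simp
  ultimately have "m (m y (m e1 e2)) (delta x y e2) = m (m y (m e1 e2)) (delta x x e1)"
    using mult_assoc_center[OF d(1)] mult_assoc_center[OF d(2)] comm[OF eQ] y eQ by simp
  then show ?thesis
    unfolding e1_def e2_def using left_cancel y eQ d upper_center_closed
    by (metis e1_def e2_def mult_closed)
qed

lemma delta_assoc_xxy_xyy:
  assumes x: "x \<in> Q" and y: "y \<in> Q"
  shows "delta x y (assoc x x y) = delta x x (assoc x y y)"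
proof -
  have Z: "delta x y (assoc x x y) \<in> Z 1" "delta x x (assoc x y y) \<in> Z 1"
    "delta x y (delta x x y) \<in> Z 1" "delta x x (delta x y y) \<in> Z 1"
    using delta_Z2 associator_Z2 delta_in_Z2 x y by auto
  have "m (delta x y (assoc x x y)) (delta x y (delta x x y)) = e"
    using delta_inverse associator_Z2 delta_in_Z2 associator_delta_center x y by auto
  moreover have "m (delta x x (assoc x y y)) (delta x x (delta x y y)) = e"
    using delta_inverse associator_Z2 delta_in_Z2 associator_delta_center x y by auto
  ultimately show ?thesis
    using center_inverse_unique[OF Z(3,1,2)] delta_delta_exchange[OF x y] center_comm Z by metis
qed

end

locale class3_pair = class3_aut_comm_loop +
  fixes x y
  assumes x: "x \<in> Q" and y: "y \<in> Q"
begin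

definition u1 where "u1 = assoc x x y"
definition v1 where "v1 = assoc y x x"
definition eps2 where "eps2 = delta x x y"
definition tau where "tau = delta y x x"

lemma pair_Z2: "u1 \<in> Z 2" "v1 \<in> Z 2" "eps2 \<in> Z 2" "tau \<in> Z 2"
  unfolding u1_def v1_def eps2_def tau_def using associator_Z2 delta_in_Z2 x y by auto

lemma pair_closed: "u1 \<in> Q" "v1 \<in> Q" "eps2 \<in> Q" "tau \<in> Q"
  using pair_Z2 upper_center_closed by auto

lemma pair_center:
  "m u1 eps2 \<in> Z 1" "m eps2 u1 \<in> Z 1" "m v1 tau \<in> Z 1" "m tau v1 \<in> Z 1"
  "m u1 v1 \<in> Z 1" "m v1 u1 \<in> Z 1"
  unfolding u1_def v1_def eps2_def tau_def
  using associator_delta_center associator_reverse_center comm x y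
  by (metis associator_closed delta_closed)+

lemma delta_tau_eq_delta_u1: "a \<in> Q \<Longrightarrow> b \<in> Q \<Longrightarrow> delta a b tau = delta a b u1"
  using delta_eq_of_inverse pair_Z2 pair_center by blast

lemma delta_kernel_u1_vanish:
  assumes q: "q \<in> delta_kernel u1"
  shows "delta q u1 tau = e" "delta q u1 eps2 = e"
proof -
  have qQ: "q \<in> Q" using delta_kernel_closed q .
  have qu1: "delta q u1 u1 = e" using delta_kernel_vanish q pair_Z2 by blast
  then have "delta q u1 v1 = e"
    using delta_vanish_transfer[OF qQ pair_Z2(1) pair_closed(2,1) pair_center(6)] by blast
  then show "delta q u1 tau = e"
    using delta_vanish_transfer[OF qQ pair_Z2(1) pair_closed(4,2) pair_center(4)] by blast
  show "delta q u1 eps2 = e"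
    using delta_vanish_transfer[OF qQ pair_Z2(1) pair_closed(3,1) pair_center(2)] qu1 by blast
qed

lemma x_in_delta_kernel: "x \<in> delta_kernel u1"
  using delta_kernel_transfer[OF pair_closed(1,3) pair_center(1)]
    delta_kernel_delta[OF x x x y upper_center_unit] inner_left_fixed x unfolding eps2_def by simp

lemma y_in_delta_kernel: "y \<in> delta_kernel u1"
proof -
  have "y \<in> delta_kernel tau"
    using delta_kernel_delta[OF y x y x upper_center_unit] inner_left_fixed x y
      unfolding tau_def by simp
  then have "y \<in> delta_kernel v1"
    using delta_kernel_transfer[OF pair_closed(2,4) pair_center(3)] by blast
  then show ?thesis
    using delta_kernel_transfer[OF pair_closed(1,2) pair_center(5)] by blast
qed

lemma Z2_subset_delta_kernel: "r \<in> Z 2 \<Longrightarrow> r \<in> delta_kernel u1"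
  using delta_kernel_transfer[OF pair_closed(1,3) pair_center(1)]
    delta_kernel_delta[OF x x _ y delta_Z2 inner_eq_delta] x upper_center_closed
  unfolding eps2_def by blast

lemma inner_x_tau: "inner (m x tau) (m x tau) y = m y (m eps2 (delta y x eps2))"
proof -
  have "inner (m x tau) (m x tau) y = inner y x (inner x x y)"
    using inner_inner[OF y x x x y] inner_left_fixed[OF y x] inner_eq_delta[OF y x x]
    unfolding tau_def by simp
  also have "\<dots> = m y (m eps2 (delta y x eps2))"
    using inner_eq_delta inner_mult inner_left_fixed[OF y x] pair_closed x y
      unfolding eps2_def by simp
  finally show ?thesis .
qed

lemma mult_x_tau_x_tau_y:
  defines "V \<equiv> m (m (m (m x x) (m y eps2)) tau) tau"
  shows "m (m x tau) (m (m x tau) y) =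
    m V (m (m (delta (m x y) x tau) (delta (m x tau) (m x y) tau)) (delta y x tau))"
proof -
  let ?k1 = "delta y x tau" and ?Ed = "delta (m x y) x tau" and ?Ec = "delta (m x tau) (m x y) tau"
  have Q: "m x y \<in> Q" "m x tau \<in> Q" "m x x \<in> Q" "m y eps2 \<in> Q" "V \<in> Q"
    unfolding V_def using x y pair_closed by auto
  have Z: "?k1 \<in> Z 1" "?Ed \<in> Z 1" "?Ec \<in> Z 1" using delta_Z2 pair_Z2 x y Q by auto
  have "m x (m x y) = m (m x x) (m y eps2)"
    unfolding eps2_def using mult_inner[OF x x y] inner_eq_delta[OF x x y] by simp
  then have "m (m x tau) (m x y) = m (m (m (m x x) (m y eps2)) tau) ?Ed"
    using mult_assoc_delta_swap[OF x Q(1) pair_Z2(4)] by simp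
  then have "m (m x tau) (m (m x y) tau) = m (m V ?Ed) ?Ec"
    unfolding V_def using mult_assoc_delta[OF Q(2,1) pair_Z2(4)]
      mult_center_right_comm[OF Z(2)] Q pair_closed by simp
  moreover have "m (m x tau) y = m (m (m x y) tau) ?k1"
    using mult_assoc_delta_swap[OF x y pair_Z2(4)] .
  ultimately have "m (m x tau) (m (m x tau) y) = m (m (m V ?Ed) ?Ec) ?k1"
    using mult_assoc_center[OF Z(1) Q(2)] Q pair_closed by simp
  also have "\<dots> = m V (m (m ?Ed ?Ec) ?k1)"
    using mult_assoc_center[OF Z(3) Q(5)] mult_assoc_center[OF Z(1) Q(5)] Z upper_center_closed
    by (simp add: upper_center_mult)
  finally show ?thesis .
qed

lemma mult_x_tau_x_tau:
  "m (m x tau) (m x tau) =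
    m (m (m (m x x) tau) tau) (m (delta x x tau) (delta (m x tau) x tau))"
proof -
  let ?K1 = "delta x x tau" and ?K2 = "delta (m x tau) x tau"
  have Q: "m x tau \<in> Q" "m x x \<in> Q" "m (m (m x x) tau) tau \<in> Q" using x pair_closed by auto
  have Z: "?K1 \<in> Z 1" "?K2 \<in> Z 1" using delta_Z2 pair_Z2 x Q by auto
  have "m (m x tau) (m x tau) = m (m (m (m x tau) x) tau) ?K2"
    using mult_assoc_delta[OF Q(1) x pair_Z2(4)] .
  also have "m (m x tau) x = m (m (m x x) tau) ?K1"
    using mult_assoc_delta_swap[OF x x pair_Z2(4)] .
  also have "m (m (m (m (m x x) tau) ?K1) tau) ?K2 = m (m (m (m (m x x) tau) tau) ?K1) ?K2"
    using mult_center_right_comm[OF Z(1)] Q pair_closed by simp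
  also have "\<dots> = m (m (m (m x x) tau) tau) (m ?K1 ?K2)"
    using mult_assoc_center[OF Z(2) Q(3)] upper_center_closed Z by simp
  finally show ?thesis .
qed

lemma mult_x_x_tau_tau_y_eps2:
  defines "V \<equiv> m (m (m (m x x) (m y eps2)) tau) tau"
  shows "m (m (m (m x x) tau) tau) (m y eps2) =
    m V (m (delta (m y eps2) (m x x) tau) (delta (m y eps2) (m (m x x) tau) tau))"
proof -
  let ?K1 = "delta (m y eps2) (m x x) tau" and ?K2 = "delta (m y eps2) (m (m x x) tau) tau"
  have Q: "m x x \<in> Q" "m y eps2 \<in> Q" "m (m x x) tau \<in> Q" "V \<in> Q"
    unfolding V_def using x y pair_closed by auto
  have Z: "?K1 \<in> Z 1" "?K2 \<in> Z 1" using delta_Z2 pair_Z2 Q by auto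
  have "m (m (m (m x x) tau) tau) (m y eps2) = m (m (m (m (m x x) tau) (m y eps2)) tau) ?K2"
    using mult_assoc_delta_swap[OF Q(3,2) pair_Z2(4)] .
  also have "m (m (m x x) tau) (m y eps2) = m (m (m (m x x) (m y eps2)) tau) ?K1"
    using mult_assoc_delta_swap[OF Q(1,2) pair_Z2(4)] .
  also have "m (m (m (m (m (m x x) (m y eps2)) tau) ?K1) tau) ?K2 = m (m V ?K1) ?K2"
    unfolding V_def using mult_center_right_comm[OF Z(1)] Q pair_closed by simp
  also have "\<dots> = m V (m ?K1 ?K2)"
    using mult_assoc_center[OF Z(2) Q(4)] upper_center_closed Z by simp
  finally show ?thesis .
qed

text \<open>Computing (x tau)((x tau) y) in two ways; all deviations are taken at tau.\<close>

lemma delta_tau_identity: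
  "m (m (delta (m x y) x tau) (delta (m x tau) (m x y) tau)) (delta y x tau) =
   m (m (delta (m y eps2) (m x x) tau) (delta (m y eps2) (m (m x x) tau) tau))
     (m (m (delta x x tau) (delta (m x tau) x tau)) (delta y x eps2))"
  (is "?lhs = m ?w ?r")
proof -
  define V where "V = m (m (m (m x x) (m y eps2)) tau) tau"
  define R where "R = m (m (m x x) tau) tau"
  have Q: "m x tau \<in> Q" "m y eps2 \<in> Q" "V \<in> Q" "R \<in> Q"
    unfolding V_def R_def using x y pair_closed by auto
  have Z: "delta y x eps2 \<in> Z 1" "m (delta x x tau) (delta (m x tau) x tau) \<in> Z 1"
    "?w \<in> Z 1" "?lhs \<in> Z 1"
    using delta_Z2 pair_Z2 pair_closed x y Q by (auto intro!: upper_center_mult)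
  have "m V ?lhs = m (m x tau) (m (m x tau) y)"
    using mult_x_tau_x_tau_y unfolding V_def by simp
  also have "\<dots> = m (m (m x tau) (m x tau)) (m (m y eps2) (delta y x eps2))"
    using mult_inner[OF Q(1,1) y] inner_x_tau mult_assoc_center[OF Z(1) y] pair_closed by simp
  also have "\<dots> = m (m R (m y eps2)) ?r"
    using mult_x_tau_x_tau mult_mult_center[OF Q(4,2) Z(2,1)] unfolding R_def by simp
  also have "\<dots> = m V (m ?w ?r)"
    using mult_x_x_tau_tau_y_eps2 mult_assoc_center[OF upper_center_mult[OF Z(2,1)] Q(3)]
      upper_center_closed[OF Z(3)] unfolding R_def V_def by simp
  finally show ?thesis
    using left_cancel[OF Q(3)] upper_center_closed upper_center_mult Z by meson
qed

lemma delta_u1_shifts: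
  "delta (m x tau) (m x y) u1 = delta x (m x y) u1"
  "delta (m x tau) x u1 = delta x x u1"
  "delta (m y eps2) (m x x) u1 = delta y (m x x) u1"
  "delta (m y eps2) (m (m x x) tau) u1 = delta y (m x x) u1"
proof -
  let ?K = "delta_kernel u1"
  have Q: "m x y \<in> Q" "m x x \<in> Q" "m (m x x) tau \<in> Q"
    using x y pair_closed by auto
  have K: "x \<in> ?K" "y \<in> ?K" "tau \<in> ?K"
    using x_in_delta_kernel y_in_delta_kernel Z2_subset_delta_kernel pair_Z2 by auto
  note K_mult = delta_kernel_mult[OF pair_Z2(1)]
  have Kxy: "m x y \<in> ?K" and Kxx: "m x x \<in> ?K" and Kxxt: "m (m x x) tau \<in> ?K"
    using K_mult K by blast+
  note tau_vanish = delta_kernel_vanish[OF _ pair_Z2(4)]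
  note eps2_vanish = delta_kernel_vanish[OF _ pair_Z2(3)]
  note u1_vanish = delta_kernel_u1_vanish
  show "delta (m x tau) (m x y) u1 = delta x (m x y) u1"
    using delta_shift_left[OF x Q(1) pair_Z2(4,1) tau_vanish[OF K(1)]
        tau_vanish[OF K_mult[OF Kxy K(1)]] u1_vanish(1)[OF Kxy]] .
  show "delta (m x tau) x u1 = delta x x u1"
    using delta_shift_left[OF x x pair_Z2(4,1) tau_vanish[OF K(1)] tau_vanish[OF Kxx]
        u1_vanish(1)[OF K(1)]] .
  show "delta (m y eps2) (m x x) u1 = delta y (m x x) u1"
    using delta_shift_left[OF y Q(2) pair_Z2(3,1) eps2_vanish[OF K(2)]
        eps2_vanish[OF K_mult[OF Kxx K(2)]] u1_vanish(2)[OF Kxx]] .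
  have "delta (m y eps2) (m (m x x) tau) u1 = delta y (m (m x x) tau) u1"
    using delta_shift_left[OF y Q(3) pair_Z2(3,1) eps2_vanish[OF K(2)]
        eps2_vanish[OF K_mult[OF Kxxt K(2)]] u1_vanish(2)[OF Kxxt]] .
  also have "\<dots> = delta y (m x x) u1"
    using delta_shift_right[OF y Q(2) pair_Z2(4,1) tau_vanish[OF Kxx]
        tau_vanish[OF K_mult[OF K(2) Kxx]]] .
  finally show "delta (m y eps2) (m (m x x) tau) u1 = delta y (m x x) u1" .
qed

lemma delta_tau_to_u1:
  "delta (m x y) x tau = delta (m x y) x u1"
  "delta (m x tau) (m x y) tau = delta x (m x y) u1"
  "delta y x tau = delta y x u1"
  "delta (m y eps2) (m x x) tau = delta y (m x x) u1"
  "delta (m y eps2) (m (m x x) tau) tau = delta y (m x x) u1"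
  "delta x x tau = delta x x u1"
  "delta (m x tau) x tau = delta x x u1"
  using delta_u1_shifts delta_tau_eq_delta_u1 x y pair_closed by simp_all

lemma delta_u1_cocycle:
  "m (delta y (m x x) u1) (delta x x u1) = m (delta (m x y) x u1) (delta y x u1)"
proof -
  have "m (delta y (m x x) u1) (delta x x u1) = m (delta (m y x) (inner y x x) u1) (delta y x u1)"
    using delta_cocycle[OF y x x pair_Z2(1)] .
  also have "delta (m y x) (inner y x x) u1 = delta (m y x) x u1"
  proof -
    have "m (m y x) x \<in> delta_kernel u1"
      using delta_kernel_mult[OF pair_Z2(1)] x_in_delta_kernel y_in_delta_kernel by blast
    then show ?thesis
      using delta_shift_right[OF _ x pair_Z2(4,1)] inner_eq_delta[OF y x x] x y
        delta_kernel_vanish[OF x_in_delta_kernel pair_Z2(4)] delta_kernel_vanish pair_Z2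
      unfolding tau_def by simp
  qed
  finally show ?thesis using comm x y by simp
qed

lemma delta_x_xy_u1_swap: "delta x (m x y) u1 = delta (m x y) x u1"
proof (rule center_cancel_squares)
  show "delta (m x y) x u1 \<in> Z 1" "delta x (m x y) u1 \<in> Z 1" "delta y x u1 \<in> Z 1"
    "delta y (m x x) u1 \<in> Z 1" "delta x x u1 \<in> Z 1" "delta y x eps2 \<in> Z 1"
    using delta_Z2 pair_Z2 x y by auto
  show "m (m (delta (m x y) x u1) (delta x (m x y) u1)) (delta y x u1) =
    m (m (delta y (m x x) u1) (delta y (m x x) u1))
      (m (m (delta x x u1) (delta x x u1)) (delta y x eps2))"
    using delta_tau_identity delta_tau_to_u1 by simp
  show "m (delta y (m x x) u1) (delta x x u1) = m (delta (m x y) x u1) (delta y x u1)"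
    by (rule delta_u1_cocycle)
  show "m (delta y x u1) (delta y x eps2) = e"
    using delta_inverse[OF y x pair_Z2(1,3) pair_center(1)] .
qed

end

context class3_aut_comm_loop
begin

lemma delta_assoc_xxy_swap:
  assumes x: "x \<in> Q" and y: "y \<in> Q"
  shows "delta x y (assoc x x y) = delta y x (assoc x x y)"
proof -
  interpret class3_pair Q m e x y by unfold_locales (rule x, rule y)
  show ?thesis
    using delta_swap_of_mult_swap[OF x y pair_Z2(1) delta_x_xy_u1_swap] unfolding u1_def .
qed

lemma associator_identities:
  assumes x: "x \<in> Q" and y: "y \<in> Q"
  defines "u1 \<equiv> assoc x x y" and "u2 \<equiv> assoc x y y"
  shows "assoc x x u2 = assoc x y u1 \<and> assoc x y u1 = assoc y x u1
       \<and> assoc x y u2 = assoc y x u2 \<and> assoc y x u2 = assoc y y u1"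
proof -
  define v1 where "v1 = assoc y x x"
  define v2 where "v2 = assoc y y x"
  have Z: "u1 \<in> Z 2" "u2 \<in> Z 2" "v1 \<in> Z 2" "v2 \<in> Z 2"
    unfolding u1_def u2_def v1_def v2_def using associator_Z2 x y by auto
  have uv: "m u1 v1 \<in> Z 1" "m u2 v2 \<in> Z 1"
    unfolding u1_def u2_def v1_def v2_def using associator_reverse_center x y by auto
  have "delta x x u2 = delta x y u1"
    unfolding u1_def u2_def using delta_assoc_xxy_xyy[OF x y] by simp
  moreover have "delta x y u1 = delta y x u1"
    unfolding u1_def using delta_assoc_xxy_swap[OF x y] .
  moreover have "delta x y u2 = delta y x u2"
    using delta_eq_of_inverse_partners[OF x y y x Z(2,4,2,4) uv(2,2)]
      delta_assoc_xxy_swap[OF y x] unfolding v2_def by simp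
  moreover have "delta y x u2 = delta y y u1"
    using delta_eq_of_inverse_partners[OF y x y y Z(2,4,1,3) uv(2,1)]
      delta_assoc_xxy_xyy[OF y x] unfolding v1_def v2_def by simp
  ultimately show ?thesis
    using associator_eq_of_delta_eq Z x y by metis
qed

end

theorem lemma4p1:
  fixes Q :: "'a set" and m :: "'a \<Rightarrow> 'a \<Rightarrow> 'a" and e x y :: 'a
  assumes "commutative_loop Q m e" and "automorphic_loop Q m e"
    and "nilpotency_class Q m e 3"
    and "x \<in> Q" and "y \<in> Q"
  defines "u1 \<equiv> associator Q m x x y"
    and "u2 \<equiv> associator Q m x y y"
  defines "z2 \<equiv> associator Q m x x u2"
    and "z3 \<equiv> associator Q m x y u1"
    and "z4 \<equiv> associator Q m x y u2"
    and "z5 \<equiv> associator Q m y x u1"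
    and "z6 \<equiv> associator Q m y x u2"
    and "z7 \<equiv> associator Q m y y u1"
  shows "z2 = z3 \<and> z3 = z5 \<and> z4 = z6 \<and> z6 = z7"
proof -
  interpret class3_aut_comm_loop Q m e
  proof
    show "loop Q m e" "\<And>a b. a \<in> Q \<Longrightarrow> b \<in> Q \<Longrightarrow> m a b = m b a"
      using assms(1) unfolding commutative_loop_def by auto
    show "automorphic_loop Q m e" by (rule assms(2))
    show "upper_center Q m e 3 = Q" using assms(3) unfolding nilpotency_class_def by simp
  qed
  show ?thesis
    using associator_identities[OF assms(4,5)]
    unfolding u1_def u2_def z2_def z3_def z4_def z5_def z6_def z7_def .
qed

end
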